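(* Let $R\neq 0$ and $S$ be $A$-lattices of $V$, and put $V'=KR+KS$. Then \[[R:S]'_A=\begin{cases}0 & \text{if } d_R>d_S,\\ K & \text{if } d_R\le d_S \text{ and } KS\neq KR,\\ \mathfrak m_S\,\mathfrak m_R^{-1}\,D & \text{if } V'=KS=KR,\end{cases}\] where, in the last case, $R=\mathfrak m_R b_{R,0}\oplus\bigoplus_{i=1}^{d_R-1}Ab_{R,i}$ and $S=\mathfrak m_S b_{S,0}\oplus\bigoplus_{i=1}^{d_S-1}Ab_{S,i}$ are decompositions as in the context (with $B_R=(b_{R,i})$, $B_S=(b_{S,i})$ $K$-bases of $V'$), and $D=\det(P)$ where $P=(P_{ij})$ is the matrix defined by $b_{S,j}=\sum_i P_{ij}b_{R,i}$ (i.e. the determinant of $\mathrm{Id}_{V'}$ from the basis $B_S$ to the basis $B_R$). In particular the right-hand side does not depend on the chosen decompositions.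
   Context: Let $K$ be a commutative field, $A\subseteq K$ a Dedekind ring, and $V$ a $K$-vector space. A fractional ideal of $A$ means a nonzero finitely generated $A$-submodule of the fraction field of $A$ (which is a subfield of $K$); for $A$-submodules $X,Y$ of $K$, $XY$ denotes the $A$-submodule generated by all products $xy$. An $A$-lattice of $V$ is a finitely generated $A$-submodule $R$ of $V$ such that the $K$-span $KR$ satisfies $\dim_K KR=\mathrm{rk}_A R$; this common value is denoted $d_R$. Every nonzero $A$-lattice $R$ can be written as $R=\mathfrak m_R b_{R,0}\oplus\bigoplus_{i=1}^{d_R-1}Ab_{R,i}$ with $\mathfrak m_R$ a fractional ideal of $A$ and $(b_{R,0},\dots,b_{R,d_R-1})$ a $K$-basis of $KR$. For $A$-lattices $R\neq 0$ and $S$ of $V$, set $V'=KR+KS$ (a finite-dimensional $K$-space) and define the $A$-index-module \[[R:S]'_A=\{\det(u):\ u\in \mathrm{End}_K(V'),\ u(R)\subseteq S\}\subseteq K.\] *)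

theory Defs
  imports Main "HOL.Vector_Spaces" "HOL-Combinatorics.Permutations"
begin

definition lz_det :: "nat \<Rightarrow> (nat \<Rightarrow> nat \<Rightarrow> 'k::comm_ring_1) \<Rightarrow> 'k" where
  "lz_det n M = (\<Sum>p | p permutes {..<n}. of_int (sign p) * (\<Prod>i<n. M i (p i)))"

definition A_submodule :: "'k set \<Rightarrow> ('k \<Rightarrow> 'v \<Rightarrow> 'v) \<Rightarrow> 'v::ab_group_add set \<Rightarrow> bool" where
  "A_submodule A scale M \<longleftrightarrow> 0 \<in> M \<and> (\<forall>x\<in>M. \<forall>y\<in>M. x + y \<in> M) \<and> (\<forall>a\<in>A. \<forall>x\<in>M. scale a x \<in> M)"

definition A_span :: "'k set \<Rightarrow> ('k \<Rightarrow> 'v \<Rightarrow> 'v) \<Rightarrow> 'v::ab_group_add set \<Rightarrow> 'v set" where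
  "A_span A scale G = {(\<Sum>g\<in>G. scale (c g) g) | c. \<forall>g\<in>G. c g \<in> A}"

definition A_fin_gen :: "'k set \<Rightarrow> ('k \<Rightarrow> 'v \<Rightarrow> 'v) \<Rightarrow> 'v::ab_group_add set \<Rightarrow> bool" where
  "A_fin_gen A scale M \<longleftrightarrow> (\<exists>G. finite G \<and> G \<subseteq> M \<and> M = A_span A scale G)"

definition A_gen :: "'k set \<Rightarrow> ('k \<Rightarrow> 'v \<Rightarrow> 'v) \<Rightarrow> 'v::ab_group_add set \<Rightarrow> 'v set" where
  "A_gen A scale P = \<Inter>{M. A_submodule A scale M \<and> P \<subseteq> M}"

definition A_indep :: "'k::comm_ring_1 set \<Rightarrow> ('k \<Rightarrow> 'v \<Rightarrow> 'v) \<Rightarrow> 'v::ab_group_add set \<Rightarrow> bool" where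
  "A_indep A scale X \<longleftrightarrow> (\<forall>G c. finite G \<longrightarrow> G \<subseteq> X \<longrightarrow> (\<forall>g\<in>G. c g \<in> A) \<longrightarrow>
        (\<Sum>g\<in>G. scale (c g) g) = 0 \<longrightarrow> (\<forall>g\<in>G. c g = 0))"

definition A_rank :: "'k::comm_ring_1 set \<Rightarrow> ('k \<Rightarrow> 'v \<Rightarrow> 'v) \<Rightarrow> 'v::ab_group_add set \<Rightarrow> nat" where
  "A_rank A scale R = Sup {card X | X. X \<subseteq> R \<and> finite X \<and> A_indep A scale X}"

definition is_subring :: "'k::field set \<Rightarrow> bool" where
  "is_subring A \<longleftrightarrow> 0 \<in> A \<and> 1 \<in> A \<and> (\<forall>x\<in>A. \<forall>y\<in>A. x + y \<in> A \<and> x - y \<in> A \<and> x * y \<in> A)"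

definition ring_ideal :: "'k::field set \<Rightarrow> 'k set \<Rightarrow> bool" where
  "ring_ideal A I \<longleftrightarrow> I \<subseteq> A \<and> A_submodule A (*) I"

definition prime_ring_ideal :: "'k::field set \<Rightarrow> 'k set \<Rightarrow> bool" where
  "prime_ring_ideal A P \<longleftrightarrow> ring_ideal A P \<and> P \<noteq> A \<and>
     (\<forall>x\<in>A. \<forall>y\<in>A. x * y \<in> P \<longrightarrow> x \<in> P \<or> y \<in> P)"

definition maximal_ring_ideal :: "'k::field set \<Rightarrow> 'k set \<Rightarrow> bool" where
  "maximal_ring_ideal A P \<longleftrightarrow> ring_ideal A P \<and> P \<noteq> A \<and>
     (\<forall>I. ring_ideal A I \<longrightarrow> P \<subseteq> I \<longrightarrow> I = P \<or> I = A)"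

definition frac_field :: "'k::field set \<Rightarrow> 'k set" where
  "frac_field A = {a / b | a b. a \<in> A \<and> b \<in> A \<and> b \<noteq> 0}"

definition integral_over :: "'k::field set \<Rightarrow> 'k \<Rightarrow> bool" where
  "integral_over A x \<longleftrightarrow> (\<exists>n c. n \<ge> 1 \<and> (\<forall>i<n. c i \<in> A) \<and> x ^ n + (\<Sum>i<n. c i * x ^ i) = 0)"

text \<open>Dedekind ring: noetherian, integrally closed in its fraction field, every nonzero
  prime ideal maximal (an integral domain automatically, being a subring of a field).\<close>
definition dedekind_subring :: "'k::field set \<Rightarrow> bool" where
  "dedekind_subring A \<longleftrightarrow> is_subring A
     \<and> (\<forall>I. ring_ideal A I \<longrightarrow> A_fin_gen A (*) I)
     \<and> (\<forall>x\<in>frac_field A. integral_over A x \<longrightarrow> x \<in> A)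
     \<and> (\<forall>P. prime_ring_ideal A P \<longrightarrow> P \<noteq> {0} \<longrightarrow> maximal_ring_ideal A P)"

definition fractional_ideal :: "'k::field set \<Rightarrow> 'k set \<Rightarrow> bool" where
  "fractional_ideal A M \<longleftrightarrow> M \<noteq> {0} \<and> A_submodule A (*) M \<and> A_fin_gen A (*) M \<and> M \<subseteq> frac_field A"

definition mod_mult :: "'k::field set \<Rightarrow> 'k set \<Rightarrow> 'k set \<Rightarrow> 'k set" where
  "mod_mult A X Y = A_gen A (*) {x * y | x y. x \<in> X \<and> y \<in> Y}"

definition frac_inv :: "'k::field set \<Rightarrow> 'k set \<Rightarrow> 'k set" where
  "frac_inv A M = {x \<in> frac_field A. \<forall>y\<in>M. x * y \<in> A}"

definition A_lattice :: "'k::field set \<Rightarrow> ('k \<Rightarrow> 'v \<Rightarrow> 'v) \<Rightarrow> 'v::ab_group_add set \<Rightarrow> bool" where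
  "A_lattice A scale R \<longleftrightarrow> A_submodule A scale R \<and> A_fin_gen A scale R \<and>
     vector_space.dim scale (module.span scale R) = A_rank A scale R"

definition lat_dim :: "('k::field \<Rightarrow> 'v \<Rightarrow> 'v) \<Rightarrow> 'v::ab_group_add set \<Rightarrow> nat" where
  "lat_dim scale R = vector_space.dim scale (module.span scale R)"

definition indexed_basis :: "('k::field \<Rightarrow> 'v \<Rightarrow> 'v) \<Rightarrow> 'v::ab_group_add set \<Rightarrow> nat \<Rightarrow> (nat \<Rightarrow> 'v) \<Rightarrow> bool" where
  "indexed_basis scale W d b \<longleftrightarrow> inj_on b {..<d} \<and> \<not> module.dependent scale (b ` {..<d})
     \<and> module.span scale (b ` {..<d}) = W"

definition lattice_decomp :: "'k::field set \<Rightarrow> ('k \<Rightarrow> 'v \<Rightarrow> 'v) \<Rightarrow> 'v::ab_group_add set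
    \<Rightarrow> 'k set \<Rightarrow> (nat \<Rightarrow> 'v) \<Rightarrow> bool" where
  "lattice_decomp A scale R m b \<longleftrightarrow> fractional_ideal A m
     \<and> indexed_basis scale (module.span scale R) (lat_dim scale R) b
     \<and> R = {scale x (b 0) + (\<Sum>i\<in>{1..<lat_dim scale R}. scale (a i) (b i)) | x a.
              x \<in> m \<and> (\<forall>i\<in>{1..<lat_dim scale R}. a i \<in> A)}"

definition is_endo :: "('k::field \<Rightarrow> 'v \<Rightarrow> 'v) \<Rightarrow> 'v::ab_group_add set \<Rightarrow> ('v \<Rightarrow> 'v) \<Rightarrow> bool" where
  "is_endo scale W u \<longleftrightarrow> u ` W \<subseteq> W \<and> (\<forall>x\<in>W. \<forall>y\<in>W. u (x + y) = u x + u y)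
     \<and> (\<forall>c. \<forall>x\<in>W. u (scale c x) = scale c (u x))"

definition coord_matrix :: "('k::field \<Rightarrow> 'v \<Rightarrow> 'v) \<Rightarrow> nat \<Rightarrow> (nat \<Rightarrow> 'v::ab_group_add) \<Rightarrow> (nat \<Rightarrow> 'v)
    \<Rightarrow> nat \<Rightarrow> nat \<Rightarrow> 'k" where
  "coord_matrix scale n b v i j = module.representation scale (b ` {..<n}) (v j) (b i)"

text \<open>det(u) for u in End_K(W), computed in some K-basis of W (independent of the choice).\<close>
definition endo_det :: "('k::field \<Rightarrow> 'v \<Rightarrow> 'v) \<Rightarrow> 'v::ab_group_add set \<Rightarrow> ('v \<Rightarrow> 'v) \<Rightarrow> 'k" where
  "endo_det scale W u =
     (let n = vector_space.dim scale W; b = (SOME b. indexed_basis scale W n b)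
      in lz_det n (coord_matrix scale n b (\<lambda>j. u (b j))))"

definition index_module :: "('k::field \<Rightarrow> 'v \<Rightarrow> 'v) \<Rightarrow> 'v::ab_group_add set \<Rightarrow> 'v set \<Rightarrow> 'k set" where
  "index_module scale R S =
     (let V' = {x + y | x y. x \<in> module.span scale R \<and> y \<in> module.span scale S}
      in {endo_det scale V' u | u. is_endo scale V' u \<and> u ` R \<subseteq> S})"

end

theory Submission
  imports Defs "Jordan_Normal_Form.Determinant"
begin

(* (1) d_R > d_S:  an endomorphism u of W with u(R) \<subseteq> S maps KR into KS, hence is not
       injective and has determinant 0; the zero map attains 0.
   (2) d_R \<le> d_S, KS \<noteq> KR:  then d_R < dim W.  A K-basis of KR inside R together with a
       common denominator d \<in> A - {0} of R with respect to it is extended to a basis e of W;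
       sending its first d_R vectors to d times independent elements of S and the remaining
       ones to a completing basis, the last one scaled by a free factor t, gives endomorphisms
       u with u(R) \<subseteq> S of every determinant.
   (3) KS = KR = W:  in the bases B_R, B_S one has det u = D * det M, M the matrix of u from
       B_R to B_S; u(R) \<subseteq> S forces the shape of M, and the Leibniz formula puts det M into the
       colon ideal (m_S : m_R).  Conversely, the map B_R -> B_S with b_S0 replaced by x b_S0,
       x \<in> (m_S : m_R), maps R into S and has determinant x D.
       Finally (m_S : m_R) = m_S m_R^-1 because nonzero fractional ideals of a Dedekind ring
       are invertible. *)

section \<open>Determinants in the Leibniz form\<close>

definition matmul :: "nat \<Rightarrow> (nat \<Rightarrow> nat \<Rightarrow> 'k::comm_ring_1) \<Rightarrow> (nat \<Rightarrow> nat \<Rightarrow> 'k) \<Rightarrow> nat \<Rightarrow> nat \<Rightarrow> 'k"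
  where "matmul n M N = (\<lambda>i j. \<Sum>k<n. M i k * N k j)"

text \<open>The Leibniz determinant agrees with the determinant of the Jordan-Normal-Form library,
  which gives us multiplicativity and the kernel criterion for free.\<close>
lemma lz_det_as_det: "lz_det n M = det (mat n n (\<lambda>(i,j). M i j))"
proof -
  have "det (mat n n (\<lambda>(i,j). M i j)) = (\<Sum>p\<in>{p. p permutes {0..<n}}. of_int (sign p) * (\<Prod>i=0..<n. (mat n n (\<lambda>(i,j). M i j)) $$ (i, p i)))"
    by (rule det_def') simp
  also have "\<dots> = (\<Sum>p\<in>{p. p permutes {..<n}}. of_int (sign p) * (\<Prod>i<n. M i (p i)))"
    by (intro sum.cong refl arg_cong2[where f="(*)"] prod.cong)
       (auto simp: atLeast0LessThan permutes_in_image)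
  finally show ?thesis unfolding lz_det_def by simp
qed

lemma lz_det_mult: "lz_det n (matmul n M N) = lz_det n M * lz_det n N"
proof -
  have "mat n n (\<lambda>(i,j). matmul n M N i j) = mat n n (\<lambda>(i,j). M i j) * mat n n (\<lambda>(i,j). N i j)"
    by (rule eq_matI) (auto simp: matmul_def scalar_prod_def atLeast0LessThan intro!: sum.cong)
  then show ?thesis unfolding lz_det_as_det by (simp add: det_mult[of _ n])
qed

lemma lz_det_diag: "lz_det n (\<lambda>i j. if i = j then d i else 0) = (\<Prod>i<n. d i)"
proof -
  have "det (mat n n (\<lambda>(i,j). if i = j then d i else 0)) = prod_list (diag_mat (mat n n (\<lambda>(i,j). if i = j then d i else (0::'a))))"
    by (rule det_upper_triangular) (auto simp: upper_triangular_def)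
  also have "\<dots> = (\<Prod>i<n. d i)"
    by (simp add: prod_list_diag_prod atLeast0LessThan)
  finally show ?thesis unfolding lz_det_as_det by simp
qed

lemma lz_det_cong: "(\<And>i j. i < n \<Longrightarrow> j < n \<Longrightarrow> M i j = N i j) \<Longrightarrow> lz_det n M = lz_det n N"
  unfolding lz_det_def
  by (intro sum.cong refl arg_cong2[where f="(*)"] prod.cong)
     (auto, metis lessThan_iff permutes_in_image)

lemma lz_det_identity:
  assumes "\<And>i j. i < n \<Longrightarrow> j < n \<Longrightarrow> M i j = (if i = j then 1 else 0)"
  shows "lz_det n M = 1"
  using lz_det_cong[of n M, OF assms] lz_det_diag[of n "\<lambda>_. 1"] by simp

lemma lz_det_scale_cols: "lz_det n (\<lambda>i j. M i j * d j) = lz_det n M * (\<Prod>i<n. d i)"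
proof -
  have "lz_det n (\<lambda>i j. M i j * d j) = lz_det n (matmul n M (\<lambda>i j. if i = j then d i else 0))"
    by (rule lz_det_cong) (simp add: matmul_def if_distrib sum.delta' cong: if_cong)
  then show ?thesis by (simp add: lz_det_mult lz_det_diag)
qed

lemma lz_det_kernel:
  fixes M :: "nat \<Rightarrow> nat \<Rightarrow> 'k::field"
  assumes "lz_det n M \<noteq> 0" "\<And>i. i < n \<Longrightarrow> (\<Sum>j<n. M i j * v j) = 0" "j < n"
  shows "v j = 0"
proof (rule ccontr)
  assume nz: "v j \<noteq> 0"
  let ?M = "mat n n (\<lambda>(i,j). M i j)"
  let ?v = "vec n v"
  have "?v \<in> carrier_vec n" by simp
  moreover have "?v \<noteq> 0\<^sub>v n" using nz assms(3) by (metis index_vec index_zero_vec(1))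
  moreover have "?M *\<^sub>v ?v = 0\<^sub>v n"
    using assms(2) by (intro eq_vecI) (auto simp: mult_mat_vec_def scalar_prod_def atLeast0LessThan)
  ultimately have "\<exists>w. w \<in> carrier_vec n \<and> w \<noteq> 0\<^sub>v n \<and> ?M *\<^sub>v w = 0\<^sub>v n" by blast
  then have "det ?M = 0"
    using det_0_iff_vec_prod_zero_field[of ?M n] by simp
  with assms(1) show False unfolding lz_det_as_det by simp
qed

lemma A_gen_submodule: "A_submodule A scale (A_gen A scale P)"
  unfolding A_gen_def A_submodule_def by blast

lemma A_gen_superset: "P \<subseteq> A_gen A scale P"
  unfolding A_gen_def by blast

lemma A_gen_least: "A_submodule A scale M \<Longrightarrow> P \<subseteq> M \<Longrightarrow> A_gen A scale P \<subseteq> M"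
  unfolding A_gen_def by blast

lemma A_gen_induct:
  assumes "w \<in> A_gen A scale P" "A_submodule A scale {w. Q w}" "\<And>p. p \<in> P \<Longrightarrow> Q p"
  shows "Q w"
  using A_gen_least[OF assms(2), of P] assms(1,3) by blast

lemma A_submodule_sum: "A_submodule A scale M \<Longrightarrow> (\<And>i. i\<in>I \<Longrightarrow> f i \<in> M) \<Longrightarrow> sum f I \<in> M"
  by (induction I rule: infinite_finite_induct) (simp_all add: A_submodule_def)

lemma A_span_least:
  assumes "A_submodule A scale M" "G \<subseteq> M"
  shows "A_span A scale G \<subseteq> M"
proof
  fix x assume "x \<in> A_span A scale G"
  then obtain c where x: "x = (\<Sum>g\<in>G. scale (c g) g)" and c: "\<forall>g\<in>G. c g \<in> A"
    unfolding A_span_def by blast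
  have "\<And>g. g \<in> G \<Longrightarrow> scale (c g) g \<in> M"
    using assms c unfolding A_submodule_def by blast
  then show "x \<in> M" unfolding x by (rule A_submodule_sum[OF assms(1)])
qed

locale field_subring =
  fixes A :: "'k::field set"
  assumes subring: "is_subring A"
begin

abbreviation Amod :: "'k set \<Rightarrow> bool" where "Amod M \<equiv> A_submodule A (*) M"
abbreviation mul :: "'k set \<Rightarrow> 'k set \<Rightarrow> 'k set" where "mul X Y \<equiv> mod_mult A X Y"
abbreviation Frac :: "'k set" where "Frac \<equiv> frac_field A"

lemma A0[simp]: "0 \<in> A" and A1[simp]: "1 \<in> A"
  using subring by (auto simp: is_subring_def)

lemma Aadd: "x \<in> A \<Longrightarrow> y \<in> A \<Longrightarrow> x + y \<in> A"
  and Adiff: "x \<in> A \<Longrightarrow> y \<in> A \<Longrightarrow> x - y \<in> A"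
  and Amult: "x \<in> A \<Longrightarrow> y \<in> A \<Longrightarrow> x * y \<in> A"
  using subring by (auto simp: is_subring_def)

lemma Aneg: "x \<in> A \<Longrightarrow> - x \<in> A"
  using Adiff[of 0 x] by simp

lemma Aprod: "(\<And>i. i \<in> I \<Longrightarrow> f i \<in> A) \<Longrightarrow> prod f I \<in> A"
  by (induction I rule: infinite_finite_induct) (auto simp: Amult)

lemma Amod_A: "Amod A"
  by (auto simp: A_submodule_def Aadd Amult)

lemma Amod_closed: "Amod M \<Longrightarrow> 0 \<in> M" "Amod M \<Longrightarrow> x \<in> M \<Longrightarrow> y \<in> M \<Longrightarrow> x + y \<in> M"
  "Amod M \<Longrightarrow> a \<in> A \<Longrightarrow> x \<in> M \<Longrightarrow> a * x \<in> M"
  by (auto simp: A_submodule_def)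

lemma Amod_image_scale: assumes "Amod M" shows "Amod ((*) d ` M)"
  unfolding A_submodule_def
proof (intro conjI ballI)
  show "0 \<in> (*) d ` M" using assms by (auto simp: A_submodule_def intro: image_eqI[of 0 _ 0])
  fix x y assume "x \<in> (*) d ` M" "y \<in> (*) d ` M"
  then obtain x' y' where "x' \<in> M" "y' \<in> M" "x = d * x'" "y = d * y'" by auto
  then show "x + y \<in> (*) d ` M" using assms
    by (auto simp: A_submodule_def distrib_left[symmetric] intro!: imageI)
next
  fix a x assume "a \<in> A" "x \<in> (*) d ` M"
  then obtain x' where "x' \<in> M" "x = d * x'" by auto
  then show "a * x \<in> (*) d ` M" using assms \<open>a \<in> A\<close>
    by (auto simp: A_submodule_def mult.left_commute[of a d] intro!: imageI)
qed

lemma mul_least: "Amod Z \<Longrightarrow> (\<And>x y. x\<in>X \<Longrightarrow> y\<in>Y \<Longrightarrow> x*y\<in>Z) \<Longrightarrow> mul X Y \<subseteq> Z"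
  unfolding mod_mult_def by (rule A_gen_least) auto

lemma mul_in: "x\<in>X \<Longrightarrow> y\<in>Y \<Longrightarrow> x*y \<in> mul X Y"
  unfolding mod_mult_def using A_gen_superset[of "{x * y |x y. x \<in> X \<and> y \<in> Y}" A "(*)"] by blast

lemma mul_submodule: "Amod (mul X Y)"
  unfolding mod_mult_def by (rule A_gen_submodule)

lemma mul_induct:
  assumes "w \<in> mul X Y" "Amod {w. Q w}" "\<And>x y. x\<in>X \<Longrightarrow> y\<in>Y \<Longrightarrow> Q (x*y)"
  shows "Q w"
  by (rule A_gen_induct[OF assms(1)[unfolded mod_mult_def] assms(2)]) (use assms(3) in auto)

lemma mul_comm: "mul X Y = mul Y X"
proof -
  have "{x * y |x y. x \<in> X \<and> y \<in> Y} = {x * y |x y. x \<in> Y \<and> y \<in> X}"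
    by (auto; metis mult.commute)
  then show ?thesis unfolding mod_mult_def by simp
qed

lemma mul_mono: "X \<subseteq> X' \<Longrightarrow> Y \<subseteq> Y' \<Longrightarrow> mul X Y \<subseteq> mul X' Y'"
  by (rule mul_least[OF mul_submodule]) (auto intro: mul_in)

lemma mul_assoc_subset: "mul (mul X Y) Z \<subseteq> mul X (mul Y Z)"
proof (rule mul_least[OF mul_submodule])
  fix w z assume w: "w \<in> mul X Y" and z: "z \<in> Z"
  show "w * z \<in> mul X (mul Y Z)"
  proof (rule mul_induct[OF w, where Q="\<lambda>w. w * z \<in> mul X (mul Y Z)"])
    show "Amod {w. w * z \<in> mul X (mul Y Z)}"
      using mul_submodule[of X "mul Y Z"] by (auto simp: A_submodule_def distrib_right mult.assoc)
    fix x y assume "x \<in> X" "y \<in> Y"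
    then show "x * y * z \<in> mul X (mul Y Z)"
      using z by (simp add: mult.assoc mul_in)
  qed
qed

lemma mul_assoc: "mul (mul X Y) Z = mul X (mul Y Z)"
proof
  show "mul (mul X Y) Z \<subseteq> mul X (mul Y Z)" by (rule mul_assoc_subset)
  have "mul X (mul Y Z) = mul (mul Z Y) X" by (simp add: mul_comm)
  also have "\<dots> \<subseteq> mul Z (mul Y X)" by (rule mul_assoc_subset)
  also have "\<dots> = mul (mul X Y) Z" by (simp add: mul_comm)
  finally show "mul X (mul Y Z) \<subseteq> mul (mul X Y) Z" .
qed

lemma mul_A: "Amod M \<Longrightarrow> mul A M = M"
proof
  assume M: "Amod M"
  show "mul A M \<subseteq> M" by (rule mul_least[OF M]) (use M in \<open>auto simp: A_submodule_def\<close>)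
  show "M \<subseteq> mul A M" using mul_in[of 1 A] by force
qed

lemma mul_scale: "mul ((*) d ` X) Y = (*) d ` mul X Y"
proof
  show "mul ((*) d ` X) Y \<subseteq> (*) d ` mul X Y"
    by (rule mul_least[OF Amod_image_scale[OF mul_submodule]])
       (auto simp: mult.assoc intro!: imageI mul_in)
  show "(*) d ` mul X Y \<subseteq> mul ((*) d ` X) Y"
  proof
    fix z assume "z \<in> (*) d ` mul X Y"
    then obtain w where w: "w \<in> mul X Y" and z: "z = d * w" by auto
    have "d * w \<in> mul ((*) d ` X) Y"
    proof (rule mul_induct[OF w, where Q="\<lambda>w. d * w \<in> mul ((*) d ` X) Y"])
      show "Amod {w. d * w \<in> mul ((*) d ` X) Y}"
        using mul_submodule[of "(*) d ` X" Y]
        by (auto simp: A_submodule_def distrib_left mult.left_commute[of d])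
      fix x y assume "x \<in> X" "y \<in> Y"
      then show "d * (x * y) \<in> mul ((*) d ` X) Y"
        by (metis imageI mult.assoc mul_in)
    qed
    then show "z \<in> mul ((*) d ` X) Y" using z by simp
  qed
qed

lemma Frac_A: "x \<in> A \<Longrightarrow> x \<in> Frac"
  unfolding frac_field_def by (rule CollectI, rule exI[of _ x], rule exI[of _ 1]) simp

lemma Frac_cases: assumes "x \<in> Frac" obtains a b where "a \<in> A" "b \<in> A" "b \<noteq> 0" "x = a / b"
  using assms unfolding frac_field_def by auto

lemma Frac_intro: "a \<in> A \<Longrightarrow> b \<in> A \<Longrightarrow> b \<noteq> 0 \<Longrightarrow> a / b \<in> Frac"
  unfolding frac_field_def by auto

lemma Frac_add: "x \<in> Frac \<Longrightarrow> y \<in> Frac \<Longrightarrow> x + y \<in> Frac"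
proof -
  assume "x \<in> Frac" "y \<in> Frac"
  obtain a b where ab: "a \<in> A" "b \<in> A" "b \<noteq> 0" "x = a / b"
    using Frac_cases[OF \<open>x \<in> Frac\<close>] by blast
  obtain c d where cd: "c \<in> A" "d \<in> A" "d \<noteq> 0" "y = c / d"
    using Frac_cases[OF \<open>y \<in> Frac\<close>] by blast
  have "x + y = (a * d + c * b) / (b * d)" using ab cd by (simp add: add_frac_eq mult.commute)
  then show "x + y \<in> Frac" using ab cd by (simp add: Frac_intro Aadd Amult)
qed

lemma Frac_mult: "x \<in> Frac \<Longrightarrow> y \<in> Frac \<Longrightarrow> x * y \<in> Frac"
proof -
  assume "x \<in> Frac" "y \<in> Frac"
  obtain a b where ab: "a \<in> A" "b \<in> A" "b \<noteq> 0" "x = a / b"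
    using Frac_cases[OF \<open>x \<in> Frac\<close>] by blast
  obtain c d where cd: "c \<in> A" "d \<in> A" "d \<noteq> 0" "y = c / d"
    using Frac_cases[OF \<open>y \<in> Frac\<close>] by blast
  have "x * y = (a * c) / (b * d)" using ab cd by simp
  then show "x * y \<in> Frac" using ab cd by (simp add: Frac_intro Amult)
qed

lemma Frac_div: "x \<in> Frac \<Longrightarrow> y \<in> Frac \<Longrightarrow> x / y \<in> Frac"
proof -
  assume x: "x \<in> Frac" and "y \<in> Frac"
  obtain a b where ab: "a \<in> A" "b \<in> A" "b \<noteq> 0" "y = a / b"
    using Frac_cases[OF \<open>y \<in> Frac\<close>] by blast
  have "b / a \<in> Frac"
    using ab Frac_intro[of b a] Frac_A[of 0] by (cases "a = 0") auto
  moreover have "x / y = x * (b / a)" using ab by simp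
  ultimately show ?thesis using Frac_mult[OF x, of "b / a"] by argo
qed

lemma Amod_Frac: "Amod Frac"
  unfolding A_submodule_def using Frac_add Frac_mult Frac_A by auto

end

section \<open>Ideals of a subring and the Dedekind axioms\<close>

context field_subring
begin

abbreviation ideal :: "'k set \<Rightarrow> bool" where "ideal I \<equiv> ring_ideal A I"

lemma ideal_A: "ideal A"
  unfolding ring_ideal_def using Amod_A by simp

lemma idealD: "ideal I \<Longrightarrow> I \<subseteq> A" "ideal I \<Longrightarrow> Amod I"
  unfolding ring_ideal_def by auto

lemma ideal_mul: "ideal I \<Longrightarrow> ideal J \<Longrightarrow> ideal (mul I J)"
proof -
  assume I: "ideal I" and J: "ideal J"
  have "mul I J \<subseteq> A"
    by (rule mul_least[OF Amod_A]) (use I J idealD in \<open>blast intro: Amult\<close>)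
  then show ?thesis unfolding ring_ideal_def using mul_submodule by simp
qed

definition adjoin :: "'k set \<Rightarrow> 'k \<Rightarrow> 'k set" where
  "adjoin I x = {p + a * x | p a. p \<in> I \<and> a \<in> A}"

lemma adjoin_props:
  assumes I: "ideal I" and x: "x \<in> A"
  shows "ideal (adjoin I x)" "I \<subseteq> adjoin I x" "x \<in> adjoin I x"
proof -
  have IA: "I \<subseteq> A" and Im: "Amod I" using idealD[OF I] by auto
  have I0: "0 \<in> I" and Iadd: "\<And>u v. u \<in> I \<Longrightarrow> v \<in> I \<Longrightarrow> u + v \<in> I"
    and Imul: "\<And>a u. a \<in> A \<Longrightarrow> u \<in> I \<Longrightarrow> a * u \<in> I"
    using Im unfolding A_submodule_def by auto
  let ?J = "adjoin I x"
  have "?J \<subseteq> A" using IA x by (auto simp: adjoin_def Aadd Amult)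
  moreover have "0 + 0 * x \<in> ?J" unfolding adjoin_def using I0 A0 by blast
  moreover have "u + v \<in> ?J" if uv: "u \<in> ?J" "v \<in> ?J" for u v
  proof -
    obtain p a p' a' where h: "u = p + a * x" "v = p' + a' * x" "p \<in> I" "a \<in> A" "p' \<in> I" "a' \<in> A"
      using uv unfolding adjoin_def by blast
    have "u + v = (p + p') + (a + a') * x" using h by (simp add: algebra_simps)
    then show ?thesis unfolding adjoin_def using h Iadd Aadd by blast
  qed
  moreover have "b * u \<in> ?J" if bu: "b \<in> A" "u \<in> ?J" for b u
  proof -
    obtain p a where h: "u = p + a * x" "p \<in> I" "a \<in> A" using bu unfolding adjoin_def by blast
    have "b * u = b * p + (b * a) * x" using h by (simp add: algebra_simps)
    then show ?thesis unfolding adjoin_def using h bu Imul Amult by blast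
  qed
  ultimately show "ideal ?J" unfolding ring_ideal_def A_submodule_def by simp
  have "p + 0 * x \<in> ?J" if "p \<in> I" for p unfolding adjoin_def using that A0 by blast
  then show "I \<subseteq> ?J" by auto
  have "0 + 1 * x \<in> ?J" unfolding adjoin_def using I0 A1 by blast
  then show "x \<in> ?J" by simp
qed

lemma adjoin_mul:
  assumes I: "ideal I" and x: "x \<in> A" and y: "y \<in> A" and xy: "x * y \<in> I"
  shows "mul (adjoin I x) (adjoin I y) \<subseteq> I"
proof (rule mul_least[OF idealD(2)[OF I]])
  have Iadd: "\<And>u v. u \<in> I \<Longrightarrow> v \<in> I \<Longrightarrow> u + v \<in> I"
    and Imul: "\<And>a u. a \<in> A \<Longrightarrow> u \<in> I \<Longrightarrow> a * u \<in> I"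
    using idealD(2)[OF I] unfolding A_submodule_def by auto
  fix u v assume "u \<in> adjoin I x" "v \<in> adjoin I y"
  then obtain p a q b where h: "u = p + a * x" "v = q + b * y" "p \<in> I" "a \<in> A" "q \<in> I" "b \<in> A"
    unfolding adjoin_def by blast
  have e: "u * v = (q + b * y) * p + (a * x) * q + (a * b) * (x * y)" using h by (simp add: algebra_simps)
  have "q \<in> A" using h idealD(1)[OF I] by blast
  then have "(q + b * y) * p \<in> I" using Imul[OF _ h(3)] Aadd Amult h(6) y by blast
  moreover have "(a * x) * q \<in> I" using Imul[OF Amult[OF h(4) x] h(5)] .
  moreover have "(a * b) * (x * y) \<in> I" using Imul[OF Amult[OF h(4) h(6)] xy] .
  ultimately show "u * v \<in> I" unfolding e using Iadd by blast
qed

text \<open>Maximal ideals are prime: for x \<notin> P one has P + Ax = A, so 1 = p + ax and y = yp + a(xy).\<close>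
lemma maximal_imp_prime:
  assumes P: "maximal_ring_ideal A P"
  shows "prime_ring_ideal A P"
proof -
  have Pid: "ideal P" and PA: "P \<noteq> A" using P unfolding maximal_ring_ideal_def by auto
  have "y \<in> P" if xy: "x \<in> A" "y \<in> A" "x * y \<in> P" and xP: "x \<notin> P" for x y
  proof -
    note J = adjoin_props[OF Pid xy(1)]
    have "adjoin P x = A" using P J xP unfolding maximal_ring_ideal_def by blast
    then have "1 \<in> adjoin P x" by simp
    then obtain p a where pa: "1 = p + a * x" "p \<in> P" "a \<in> A" unfolding adjoin_def by blast
    have "y = y * (p + a * x)" using pa(1) by simp
    then have "y = y * p + a * (x * y)" by (simp add: algebra_simps)
    moreover have "y * p \<in> P" "a * (x * y) \<in> P"
      using Amod_closed(3)[OF idealD(2)[OF Pid]] pa xy by (metis mult.commute)+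
    ultimately show "y \<in> P" using Amod_closed(2)[OF idealD(2)[OF Pid]] by metis
  qed
  then show ?thesis using Pid PA unfolding prime_ring_ideal_def by blast
qed

text \<open>Strict inclusion between ideals; its well-foundedness (in the reversed direction) is
  the noetherian property.\<close>
definition ideal_ascent :: "('k set \<times> 'k set) set" where
  "ideal_ascent = {(J, I). ideal I \<and> ideal J \<and> I \<subset> J}"

primrec prod_ideals :: "'k set list \<Rightarrow> 'k set" where
  "prod_ideals [] = A"
| "prod_ideals (P # Ps) = mul P (prod_ideals Ps)"

lemma prod_ideals_append: "prod_ideals (Ps @ Qs) = mul (prod_ideals Ps) (prod_ideals Qs)"
proof (induction Ps)
  case Nil
  have "Amod (prod_ideals Qs)" by (cases Qs) (simp_all add: Amod_A mul_submodule)
  then show ?case by (simp add: mul_A)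
next
  case (Cons P Ps) then show ?case by (simp add: mul_assoc)
qed

lemma prod_ideals_ideal: "(\<And>Q. Q \<in> set Ps \<Longrightarrow> ideal Q) \<Longrightarrow> ideal (prod_ideals Ps)"
  by (induction Ps) (simp_all add: ideal_A ideal_mul)

lemma prod_ideals_remove: "Q \<in> set Ps \<Longrightarrow> prod_ideals Ps = mul Q (prod_ideals (remove1 Q Ps))"
proof (induction Ps)
  case (Cons P Ps)
  show ?case
  proof (cases "P = Q")
    case False
    then have "prod_ideals (P # Ps) = mul P (mul Q (prod_ideals (remove1 Q Ps)))"
      using Cons by simp
    also have "\<dots> = mul Q (mul P (prod_ideals (remove1 Q Ps)))"
      by (simp only: mul_assoc[symmetric] mul_comm[of P Q])
    finally show ?thesis using False by simp
  qed simp
qed simp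

lemma prime_contains_factor:
  assumes "prime_ring_ideal A P" "\<And>Q. Q \<in> set Ps \<Longrightarrow> ideal Q" "prod_ideals Ps \<subseteq> P"
  shows "\<exists>Q\<in>set Ps. Q \<subseteq> P"
  using assms(2,3)
proof (induction Ps)
  case Nil
  then show ?case using assms(1) unfolding prime_ring_ideal_def ring_ideal_def by auto
next
  case (Cons Q Ps)
  show ?case
  proof (cases "Q \<subseteq> P")
    case False
    then obtain q where q: "q \<in> Q" "q \<notin> P" by blast
    have qA: "q \<in> A" using q Cons.prems(1) idealD by auto
    have "prod_ideals Ps \<subseteq> P"
    proof
      fix t assume t: "t \<in> prod_ideals Ps"
      have tA: "t \<in> A" using t prod_ideals_ideal[of Ps] Cons.prems(1) idealD by auto
      have "q * t \<in> P" using Cons.prems(2) mul_in[OF q(1) t] by auto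
      then show "t \<in> P" using assms(1) q qA tA unfolding prime_ring_ideal_def by blast
    qed
    then show ?thesis using Cons.IH Cons.prems(1) by auto
  qed simp
qed

end

locale dedekind_ring = field_subring +
  assumes dedekind: "dedekind_subring A"
begin

lemma noetherian: "ideal I \<Longrightarrow> A_fin_gen A (*) I"
  using dedekind unfolding dedekind_subring_def by blast

lemma integrally_closed: "x \<in> Frac \<Longrightarrow> integral_over A x \<Longrightarrow> x \<in> A"
  using dedekind unfolding dedekind_subring_def by blast

lemma prime_imp_maximal: "prime_ring_ideal A P \<Longrightarrow> P \<noteq> {0} \<Longrightarrow> maximal_ring_ideal A P"
  using dedekind unfolding dedekind_subring_def by blast

text \<open>Noetherian induction: there is no infinite strictly ascending chain of ideals, since
  the union of such a chain would be finitely generated.\<close>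
lemma wf_ideal_ascent: "wf ideal_ascent"
proof (rule wf_iff_no_infinite_down_chain[THEN iffD2], rule notI)
  assume "\<exists>f. \<forall>i. (f (Suc i), f i) \<in> ideal_ascent"
  then obtain f where f: "\<And>i. (f (Suc i), f i) \<in> ideal_ascent" by blast
  have fid: "ideal (f i)" for i using f[of i] unfolding ideal_ascent_def by auto
  have fstrict: "f i \<subset> f (Suc i)" for i using f[of i] unfolding ideal_ascent_def by auto
  have fmono: "i \<le> j \<Longrightarrow> f i \<subseteq> f j" for i j
    using lift_Suc_mono_le[of f i j] fstrict by auto
  define U where "U = (\<Union>i. f i)"
  have "ideal U"
    unfolding ring_ideal_def A_submodule_def
  proof (intro conjI ballI)
    show "U \<subseteq> A" unfolding U_def using idealD(1)[OF fid] by blast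
    show "0 \<in> U" unfolding U_def using Amod_closed(1)[OF idealD(2)[OF fid[of 0]]] by blast
    fix x y assume "x \<in> U" "y \<in> U"
    then obtain i j where "x \<in> f i" "y \<in> f j" unfolding U_def by blast
    then have "x \<in> f (max i j)" "y \<in> f (max i j)" using fmono[of i "max i j"] fmono[of j "max i j"] by auto
    then show "x + y \<in> U" unfolding U_def using Amod_closed(2)[OF idealD(2)[OF fid]] by blast
  next
    fix a x assume "a \<in> A" "x \<in> U"
    then show "a * x \<in> U" unfolding U_def using Amod_closed(3)[OF idealD(2)[OF fid]] by blast
  qed
  then obtain G where G: "finite G" "G \<subseteq> U" "U = A_span A (*) G"
    using noetherian unfolding A_fin_gen_def by blast
  have "\<forall>g\<in>G. \<exists>i. g \<in> f i" using G(2) unfolding U_def by blast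
  then obtain h where h: "\<forall>g\<in>G. g \<in> f (h g)" by (rule bchoice[elim_format]) blast
  define N where "N = Max (insert 0 (h ` G))"
  have "G \<subseteq> f N"
  proof
    fix g assume "g \<in> G"
    then have "h g \<le> N" unfolding N_def using G(1) by simp
    then show "g \<in> f N" using h \<open>g \<in> G\<close> fmono[of "h g" N] by blast
  qed
  then have "U \<subseteq> f N" unfolding G(3) using A_span_least idealD(2)[OF fid] by blast
  moreover have "f (Suc N) \<subseteq> U" unfolding U_def by blast
  ultimately show False using fstrict[of N] by blast
qed

lemma ascending_chain_stationary:
  assumes "\<And>k. ideal (J k)" "\<And>k. J k \<subseteq> J (Suc k)"
  shows "\<exists>K. J (Suc K) = J K"
proof -
  have "J 0 \<in> range J" by simp
  then obtain z where "z \<in> range J" and zmin: "\<And>y. (y, z) \<in> ideal_ascent \<Longrightarrow> y \<notin> range J"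
    by (rule wfE_min[OF wf_ideal_ascent]) blast
  then obtain K where K: "z = J K" by blast
  have "(J (Suc K), J K) \<notin> ideal_ascent" using zmin K by blast
  then show ?thesis using assms unfolding ideal_ascent_def by blast
qed

lemma exists_maximal:
  assumes "ideal I" "I \<noteq> A"
  shows "\<exists>P. maximal_ring_ideal A P \<and> I \<subseteq> P"
proof -
  define Q where "Q = {J. ideal J \<and> I \<subseteq> J \<and> J \<noteq> A}"
  have "I \<in> Q" using assms unfolding Q_def by blast
  obtain z where z: "z \<in> Q" and zmin: "\<And>y. (y, z) \<in> ideal_ascent \<Longrightarrow> y \<notin> Q"
    by (rule wfE_min[OF wf_ideal_ascent \<open>I \<in> Q\<close>]) blast
  have "maximal_ring_ideal A z"
    unfolding maximal_ring_ideal_def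
  proof (intro conjI allI impI)
    show "ideal z" "z \<noteq> A" using z unfolding Q_def by auto
    fix J assume J: "ideal J" "z \<subseteq> J"
    show "J = z \<or> J = A"
    proof (rule ccontr)
      assume "\<not> (J = z \<or> J = A)"
      then have "(J, z) \<in> ideal_ascent" "J \<in> Q" using J z unfolding ideal_ascent_def Q_def by auto
      then show False using zmin by blast
    qed
  qed
  then show ?thesis using z unfolding Q_def by blast
qed

end

section \<open>Invertibility of fractional ideals of a Dedekind ring\<close>

context dedekind_ring
begin

definition nonzero_primes :: "'a set list \<Rightarrow> bool" where
  "nonzero_primes Ps \<longleftrightarrow> (\<forall>Q\<in>set Ps. prime_ring_ideal A Q \<and> Q \<noteq> {0})"

lemma nonzero_primes_ideal: "nonzero_primes Ps \<Longrightarrow> Q \<in> set Ps \<Longrightarrow> ideal Q"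
  unfolding nonzero_primes_def prime_ring_ideal_def by blast

text \<open>Every nonzero ideal contains a product of nonzero prime ideals (noetherian induction:
  a non-prime ideal I with xy \<in> I, x, y \<notin> I contains (I + Ax)(I + Ay)).\<close>
lemma contains_prime_product:
  "ideal I \<Longrightarrow> I \<noteq> {0} \<Longrightarrow> \<exists>Ps. nonzero_primes Ps \<and> prod_ideals Ps \<subseteq> I"
  using wf_ideal_ascent
proof (induction I rule: wf_induct_rule)
  case (less I)
  have I: "ideal I" "I \<noteq> {0}" using less.prems by auto
  consider "I = A" | "prime_ring_ideal A I"
    | x y where "x \<in> A" "y \<in> A" "x * y \<in> I" "x \<notin> I" "y \<notin> I"
    using I unfolding prime_ring_ideal_def by blast
  then show ?case
  proof cases
    case 1
    then have "nonzero_primes [] \<and> prod_ideals [] \<subseteq> I" unfolding nonzero_primes_def by simp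
    then show ?thesis by blast
  next
    case 2
    have "prod_ideals [I] = I" using mul_comm[of I A] mul_A[OF idealD(2)[OF I(1)]] by simp
    then have "nonzero_primes [I] \<and> prod_ideals [I] \<subseteq> I" unfolding nonzero_primes_def using 2 I by simp
    then show ?thesis by blast
  next
    case (3 x y)
    have smaller: "\<exists>Ps. nonzero_primes Ps \<and> prod_ideals Ps \<subseteq> adjoin I z" if "z \<in> A" "z \<notin> I" for z
    proof -
      note J = adjoin_props[OF I(1) \<open>z \<in> A\<close>]
      have "(adjoin I z, I) \<in> ideal_ascent" using J I that unfolding ideal_ascent_def by blast
      moreover have "adjoin I z \<noteq> {0}" using J(2) I(2) Amod_closed(1)[OF idealD(2)[OF I(1)]] by blast
      ultimately show ?thesis using less.IH J(1) by blast
    qed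
    obtain Ps1 where P1: "nonzero_primes Ps1" "prod_ideals Ps1 \<subseteq> adjoin I x"
      using smaller[OF 3(1,4)] by blast
    obtain Ps2 where P2: "nonzero_primes Ps2" "prod_ideals Ps2 \<subseteq> adjoin I y"
      using smaller[OF 3(2,5)] by blast
    have "prod_ideals (Ps1 @ Ps2) \<subseteq> mul (adjoin I x) (adjoin I y)"
      unfolding prod_ideals_append using P1(2) P2(2) by (rule mul_mono)
    also have "\<dots> \<subseteq> I" by (rule adjoin_mul[OF I(1) 3(1-3)])
    finally have "nonzero_primes (Ps1 @ Ps2) \<and> prod_ideals (Ps1 @ Ps2) \<subseteq> I"
      using P1(1) P2(1) unfolding nonzero_primes_def by auto
    then show ?thesis by blast
  qed
qed

lemma maximal_in_prime_product:
  assumes P: "maximal_ring_ideal A P" and Ps: "nonzero_primes Ps" "prod_ideals Ps \<subseteq> P"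
  shows "P \<in> set Ps"
proof -
  obtain Q where Q: "Q \<in> set Ps" "Q \<subseteq> P"
    using prime_contains_factor[OF maximal_imp_prime[OF P] nonzero_primes_ideal[OF Ps(1)] Ps(2)]
    by blast
  have "maximal_ring_ideal A Q"
    using Ps(1) Q(1) prime_imp_maximal unfolding nonzero_primes_def by blast
  then have "P = Q \<or> P = A" using Q(2) P unfolding maximal_ring_ideal_def by blast
  then show ?thesis using P Q(1) unfolding maximal_ring_ideal_def by blast
qed

text \<open>The inverse of a nonzero maximal ideal P is strictly larger than A: take a \<in> P - {0} and
  a product P Q_1 ... Q_r \<subseteq> aA of minimal length; some b \<in> Q_1 ... Q_r lies outside aA,
  and b/a \<in> P^-1 - A.\<close>
lemma inverse_exceeds_A:
  assumes P: "maximal_ring_ideal A P" "P \<noteq> {0}"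
  shows "\<exists>t\<in>frac_inv A P. t \<notin> A"
proof -
  have Pid: "ideal P" using P(1) unfolding maximal_ring_ideal_def by auto
  obtain a where a: "a \<in> P" "a \<noteq> 0" using P(2) Amod_closed(1)[OF idealD(2)[OF Pid]] by blast
  have aA: "a \<in> A" using a idealD(1)[OF Pid] by blast
  define aA where "aA = (*) a ` A"
  have aAid: "ideal aA"
    unfolding ring_ideal_def aA_def using Amod_image_scale[OF Amod_A] aA Amult by blast
  have "a * 1 \<in> aA" unfolding aA_def using A1 by blast
  then have "aA \<noteq> {0}" using a(2) by auto
  then obtain Ps0 where "nonzero_primes Ps0 \<and> prod_ideals Ps0 \<subseteq> aA"
    using contains_prime_product[OF aAid] by blast
  then obtain Ps where Ps: "nonzero_primes Ps" "prod_ideals Ps \<subseteq> aA"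
    and Psmin: "\<And>Qs. nonzero_primes Qs \<and> prod_ideals Qs \<subseteq> aA \<Longrightarrow> length Ps \<le> length Qs"
    using ex_has_least_nat[of "\<lambda>Ps. nonzero_primes Ps \<and> prod_ideals Ps \<subseteq> aA" Ps0 length] by blast
  have "aA \<subseteq> P"
    unfolding aA_def using Amod_closed(3)[OF idealD(2)[OF Pid] _ a(1)] by (auto simp: mult.commute)
  then have PinPs: "P \<in> set Ps" using maximal_in_prime_product[OF P(1) Ps(1)] Ps(2) by blast
  define Ps' where "Ps' = remove1 P Ps"
  have eq: "prod_ideals Ps = mul P (prod_ideals Ps')" unfolding Ps'_def by (rule prod_ideals_remove[OF PinPs])
  have "length Ps' < length Ps"
    unfolding Ps'_def using length_pos_if_in_set[OF PinPs] PinPs by (simp add: length_remove1)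
  moreover have "nonzero_primes Ps'"
    using Ps(1) set_remove1_subset[of P Ps] unfolding nonzero_primes_def Ps'_def by blast
  ultimately have "\<not> prod_ideals Ps' \<subseteq> aA" using Psmin[of Ps'] by linarith
  then obtain b where b: "b \<in> prod_ideals Ps'" "b \<notin> aA" by blast
  have bA: "b \<in> A" using b(1) idealD(1) prod_ideals_ideal nonzero_primes_ideal[OF \<open>nonzero_primes Ps'\<close>] by blast
  define t where "t = b / a"
  have "t * p \<in> A" if p: "p \<in> P" for p
  proof -
    have "p * b \<in> aA" using Ps(2) mul_in[OF p b(1)] unfolding eq by blast
    then obtain x where x: "x \<in> A" "p * b = a * x" unfolding aA_def by blast
    have "t * p = x" unfolding t_def using x(2) a(2) by (simp add: field_simps)
    then show ?thesis using x(1) by simp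
  qed
  then have "t \<in> frac_inv A P" unfolding frac_inv_def t_def using Frac_intro[OF bA aA a(2)] by blast
  moreover have "t \<notin> A"
  proof
    assume "t \<in> A"
    then have "a * t \<in> aA" unfolding aA_def by blast
    then show False using b(2) a(2) unfolding t_def by simp
  qed
  ultimately show ?thesis by blast
qed

lemma common_denominator:
  assumes "finite G" "G \<subseteq> Frac"
  shows "\<exists>d\<in>A. d \<noteq> 0 \<and> (\<forall>g\<in>G. d * g \<in> A)"
  using assms
proof (induction G rule: finite_induct)
  case empty then show ?case using A1 by (intro bexI[of _ 1]) auto
next
  case (insert g G)
  then obtain d where d: "d \<in> A" "d \<noteq> 0" "\<forall>h\<in>G. d * h \<in> A" by auto
  obtain a b where ab: "a \<in> A" "b \<in> A" "b \<noteq> 0" "g = a / b"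
    using insert.prems Frac_cases by blast
  have "(d * b) * g = d * a" using ab(3,4) by simp
  then have "(d * b) * g \<in> A" using d(1) ab(1) Amult by metis
  moreover have "(d * b) * h \<in> A" if "h \<in> G" for h
  proof -
    have "b * (d * h) \<in> A" using d(3) that ab(2) Amult by blast
    then show ?thesis by (simp add: algebra_simps)
  qed
  ultimately have "\<forall>h\<in>insert g G. (d * b) * h \<in> A" by blast
  moreover have "d * b \<in> A" "d * b \<noteq> 0" using d ab Amult by auto
  ultimately show ?case by blast
qed

lemma common_denominator_span:
  assumes "finite G" "G \<subseteq> Frac"
  shows "\<exists>d\<in>A. d \<noteq> 0 \<and> (\<forall>m\<in>A_span A (*) G. d * m \<in> A)"
proof -
  obtain d where d: "d \<in> A" "d \<noteq> 0" "\<forall>g\<in>G. d * g \<in> A" using common_denominator[OF assms] by blast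
  have "d * m \<in> A" if m: "m \<in> A_span A (*) G" for m
  proof -
    obtain c where c: "m = (\<Sum>g\<in>G. c g * g)" "\<forall>g\<in>G. c g \<in> A" using m unfolding A_span_def by blast
    have "d * m = (\<Sum>g\<in>G. c g * (d * g))" unfolding c(1) by (simp add: sum_distrib_left algebra_simps)
    also have "\<dots> \<in> A" using c(2) d(3) Amult by (intro A_submodule_sum[OF Amod_A]) blast
    finally show ?thesis .
  qed
  then show ?thesis using d by blast
qed

definition power_span :: "'a \<Rightarrow> nat \<Rightarrow> 'a set" where
  "power_span x k = {(\<Sum>i<k. a i * x ^ i) | a. \<forall>i<k. a i \<in> A}"

lemma power_span_submodule: "Amod (power_span x k)"
  unfolding A_submodule_def
proof (intro conjI ballI)
  show "0 \<in> power_span x k" unfolding power_span_def by (rule CollectI, rule exI[of _ "\<lambda>_. 0"]) simp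
next
  fix u v assume "u \<in> power_span x k" "v \<in> power_span x k"
  then obtain a b where ab: "u = (\<Sum>i<k. a i * x ^ i)" "\<forall>i<k. a i \<in> A"
    "v = (\<Sum>i<k. b i * x ^ i)" "\<forall>i<k. b i \<in> A" unfolding power_span_def by blast
  have "u + v = (\<Sum>i<k. (a i + b i) * x ^ i)" unfolding ab by (simp add: sum.distrib algebra_simps)
  then show "u + v \<in> power_span x k" unfolding power_span_def using ab Aadd
    by (intro CollectI exI[of _ "\<lambda>i. a i + b i"] conjI) auto
next
  fix e u assume e: "e \<in> A" and "u \<in> power_span x k"
  then obtain a where a: "u = (\<Sum>i<k. a i * x ^ i)" "\<forall>i<k. a i \<in> A" unfolding power_span_def by blast
  have "e * u = (\<Sum>i<k. (e * a i) * x ^ i)" unfolding a by (simp add: sum_distrib_left algebra_simps)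
  then show "e * u \<in> power_span x k" unfolding power_span_def using a e Amult
    by (intro CollectI exI[of _ "\<lambda>i. e * a i"] conjI) auto
qed

lemma power_span_mono: "power_span x k \<subseteq> power_span x (Suc k)"
proof
  fix u assume "u \<in> power_span x k"
  then obtain a where a: "u = (\<Sum>i<k. a i * x ^ i)" "\<forall>i<k. a i \<in> A" unfolding power_span_def by blast
  then have "u = (\<Sum>i<Suc k. (if i < k then a i else 0) * x ^ i) \<and> (\<forall>i<Suc k. (if i < k then a i else 0) \<in> A)"
    by simp
  then show "u \<in> power_span x (Suc k)" unfolding power_span_def
    by (intro CollectI exI[of _ "\<lambda>i. if i < k then a i else 0"]) blast
qed

lemma power_in_power_span: "x ^ k \<in> power_span x (Suc k)"
proof -
  have "x ^ k = (\<Sum>i<Suc k. (if i = k then 1 else 0) * x ^ i)" by (simp add: if_distrib cong: if_cong)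
  then show ?thesis unfolding power_span_def
    by (intro CollectI exI[of _ "\<lambda>i. if i = k then 1 else 0"] conjI) auto
qed

text \<open>If all powers of x have a common denominator c then x is integral over A: the ideals
  c (A + Ax + ... + Ax^(k-1)) form an ascending chain, which becomes stationary at some K,
  so x^K is an A-combination of lower powers.\<close>
lemma integral_if_bounded_powers:
  assumes c: "c \<in> A" "c \<noteq> 0" and cx: "\<And>k. c * x ^ k \<in> A"
  shows "integral_over A x"
proof -
  define J where "J k = (*) c ` power_span x k" for k
  have "ideal (J k)" for k
  proof -
    have "z \<in> A" if z: "z \<in> J k" for z
    proof -
      obtain a where a: "z = c * (\<Sum>i<k. a i * x ^ i)" "\<forall>i<k. a i \<in> A"
        using z unfolding J_def power_span_def by blast
      have "z = (\<Sum>i<k. a i * (c * x ^ i))" unfolding a by (simp add: sum_distrib_left algebra_simps)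
      also have "\<dots> \<in> A" using a(2) cx Amult by (intro A_submodule_sum[OF Amod_A]) auto
      finally show "z \<in> A" .
    qed
    then show ?thesis unfolding ring_ideal_def J_def using Amod_image_scale[OF power_span_submodule] by blast
  qed
  moreover have "J k \<subseteq> J (Suc k)" for k unfolding J_def using power_span_mono by blast
  ultimately obtain K where JK: "J (Suc K) = J K" using ascending_chain_stationary by blast
  then have "c * x ^ K \<in> J K" using power_in_power_span unfolding J_def by blast
  then obtain a where a: "c * x ^ K = c * (\<Sum>i<K. a i * x ^ i)" "\<forall>i<K. a i \<in> A"
    unfolding J_def power_span_def by blast
  have xK: "x ^ K = (\<Sum>i<K. a i * x ^ i)" using a(1) c(2) by simp
  then have "K \<noteq> 0" by (intro notI) simp
  moreover have "x ^ K + (\<Sum>i<K. (- a i) * x ^ i) = 0" using xK by (simp add: sum_negf)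
  ultimately show ?thesis unfolding integral_over_def using a(2) Aneg
    by (intro exI[of _ K] exI[of _ "\<lambda>i. - a i"]) auto
qed

text \<open>An element x of K stabilising a nonzero finitely generated A-submodule M of the
  fraction field lies in A (A is integrally closed).\<close>
lemma stabiliser_in_A:
  assumes M: "Amod M" "A_fin_gen A (*) M" "M \<subseteq> Frac" "M \<noteq> {0}"
    and xM: "\<And>m. m \<in> M \<Longrightarrow> x * m \<in> M"
  shows "x \<in> A"
proof -
  obtain G where G: "finite G" "G \<subseteq> M" "M = A_span A (*) G" using M(2) unfolding A_fin_gen_def by blast
  then obtain d where d: "d \<in> A" "d \<noteq> 0" "\<forall>m\<in>M. d * m \<in> A"
    using common_denominator_span[OF G(1)] M(3) by blast
  obtain m0 where m0: "m0 \<in> M" "m0 \<noteq> 0" using M(4) Amod_closed(1)[OF M(1)] by blast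
  have pw: "x ^ k * m0 \<in> M" for k
    by (induction k) (use m0 xM in \<open>auto simp: mult.assoc\<close>)
  have "d * m0 * x ^ k \<in> A" for k
  proof -
    have "d * (x ^ k * m0) \<in> A" using d(3) pw[of k] by blast
    then show ?thesis by (simp add: algebra_simps)
  qed
  then have "integral_over A x"
    using integral_if_bounded_powers[of "d * m0"] d m0 by (simp add: Amult)
  moreover have "x \<in> Frac"
  proof -
    have "x * m0 \<in> Frac" "m0 \<in> Frac" using xM[OF m0(1)] m0(1) M(3) by blast+
    then show ?thesis using Frac_div[of "x * m0" m0] m0(2) by simp
  qed
  ultimately show ?thesis using integrally_closed by blast
qed

lemma mul_frac_inv_le: "mul I (frac_inv A I) \<subseteq> A"
  by (rule mul_least[OF Amod_A]) (auto simp: frac_inv_def mult.commute)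

lemma one_in_frac_inv: "I \<subseteq> A \<Longrightarrow> 1 \<in> frac_inv A I"
  unfolding frac_inv_def using Frac_A[OF A1] by auto

lemma invertible_if_inverse_exists:
  assumes "mul I N = A" "N \<subseteq> Frac"
  shows "mul I (frac_inv A I) = A"
proof -
  have "N \<subseteq> frac_inv A I"
  proof
    fix n assume n: "n \<in> N"
    have "n * i \<in> A" if "i \<in> I" for i
      using mul_in[OF that n] assms(1) by (simp add: mult.commute)
    then show "n \<in> frac_inv A I" unfolding frac_inv_def using n assms(2) by blast
  qed
  then have "A \<subseteq> mul I (frac_inv A I)" using assms(1) mul_mono[of I I N "frac_inv A I"] by blast
  then show ?thesis using mul_frac_inv_le by blast
qed

text \<open>For a nonzero maximal ideal P and a nonzero ideal I \<subseteq> P, the ideal I P^-1 is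
  strictly larger than I (otherwise an element of P^-1 - A would stabilise I).\<close>
lemma mul_inverse_maximal_grows:
  assumes P: "maximal_ring_ideal A P" "P \<noteq> {0}" and I: "ideal I" "I \<noteq> {0}" "I \<subseteq> P"
  shows "I \<subset> mul I (frac_inv A P)" "ideal (mul I (frac_inv A P))"
proof -
  have PA: "P \<subseteq> A" using P(1) unfolding maximal_ring_ideal_def ring_ideal_def by blast
  let ?J = "mul I (frac_inv A P)"
  have "?J \<subseteq> mul P (frac_inv A P)" using mul_mono[OF I(3) order_refl] .
  then show "ideal ?J" unfolding ring_ideal_def using mul_frac_inv_le mul_submodule by blast
  have "p * 1 \<in> ?J" if "p \<in> I" for p by (rule mul_in[OF that one_in_frac_inv[OF PA]])
  then have IJ: "I \<subseteq> ?J" by auto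
  have "?J \<noteq> I"
  proof
    assume eq: "?J = I"
    obtain t where t: "t \<in> frac_inv A P" "t \<notin> A" using inverse_exceeds_A[OF P] by blast
    have "t * m \<in> I" if "m \<in> I" for m using mul_in[OF that t(1)] eq by (simp add: mult.commute)
    moreover have "I \<subseteq> Frac" using idealD(1)[OF I(1)] Frac_A by blast
    ultimately have "t \<in> A"
      using stabiliser_in_A[OF idealD(2)[OF I(1)] noetherian[OF I(1)] _ I(2)] by blast
    then show False using t(2) by blast
  qed
  then show "I \<subset> ?J" using IJ by blast
qed

text \<open>Nonzero ideals are invertible, by noetherian induction: I \<subseteq> P maximal, and the
  strictly larger ideal I P^-1 is invertible by induction.\<close>
lemma ideal_invertible:
  "ideal I \<Longrightarrow> I \<noteq> {0} \<Longrightarrow> mul I (frac_inv A I) = A"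
  using wf_ideal_ascent
proof (induction I rule: wf_induct_rule)
  case (less I)
  have I: "ideal I" "I \<noteq> {0}" using less.prems by auto
  show ?case
  proof (cases "I = A")
    case True
    have "a * 1 \<in> mul A (frac_inv A A)" if "a \<in> A" for a by (rule mul_in[OF that one_in_frac_inv]) simp
    then show ?thesis using True mul_frac_inv_le by force
  next
    case False
    then obtain P where P: "maximal_ring_ideal A P" "I \<subseteq> P" using exists_maximal[OF I(1)] by blast
    have P0: "P \<noteq> {0}" using P(2) I(2) Amod_closed(1)[OF idealD(2)[OF I(1)]] by blast
    let ?J = "mul I (frac_inv A P)"
    note grows = mul_inverse_maximal_grows[OF P(1) P0 I P(2)]
    then have "(?J, I) \<in> ideal_ascent" using I(1) unfolding ideal_ascent_def by blast
    moreover have "?J \<noteq> {0}" using grows(1) I(2) Amod_closed(1)[OF idealD(2)[OF I(1)]] by blast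
    ultimately have "mul ?J (frac_inv A ?J) = A" using less.IH grows(2) by blast
    then have "mul I (mul (frac_inv A P) (frac_inv A ?J)) = A" by (simp add: mul_assoc)
    moreover have "mul (frac_inv A P) (frac_inv A ?J) \<subseteq> Frac"
      by (rule mul_least[OF Amod_Frac]) (auto simp: frac_inv_def Frac_mult)
    ultimately show ?thesis by (rule invertible_if_inverse_exists)
  qed
qed

text \<open>Nonzero fractional ideals are invertible: clear denominators and use the ideal case.\<close>
lemma fractional_ideal_invertible:
  assumes M: "fractional_ideal A M"
  shows "mul M (frac_inv A M) = A"
proof -
  have Mm: "Amod M" "A_fin_gen A (*) M" "M \<subseteq> Frac" "M \<noteq> {0}" using M unfolding fractional_ideal_def by auto
  obtain G where G: "finite G" "G \<subseteq> M" "M = A_span A (*) G" using Mm(2) unfolding A_fin_gen_def by blast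
  then obtain d where d: "d \<in> A" "d \<noteq> 0" "\<forall>m\<in>M. d * m \<in> A"
    using common_denominator_span[OF G(1)] Mm(3) by blast
  define I where "I = (*) d ` M"
  have "ideal I" unfolding ring_ideal_def I_def using d(3) Amod_image_scale[OF Mm(1)] by blast
  moreover have "I \<noteq> {0}"
  proof -
    obtain m where "m \<in> M" "m \<noteq> 0" using Mm(4) Amod_closed(1)[OF Mm(1)] by blast
    then have "d * m \<in> I" "d * m \<noteq> 0" unfolding I_def using d(2) by auto
    then show ?thesis by blast
  qed
  ultimately have II: "mul I (frac_inv A I) = A" by (rule ideal_invertible)
  define N where "N = (*) d ` frac_inv A I"
  have "mul M N = (*) d ` mul (frac_inv A I) M" unfolding N_def by (subst mul_comm) (rule mul_scale)
  also have "\<dots> = mul I (frac_inv A I)" unfolding I_def by (simp add: mul_scale mul_comm)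
  finally have "mul M N = A" using II by simp
  moreover have "N \<subseteq> Frac" unfolding N_def frac_inv_def using Frac_mult Frac_A[OF d(1)] by blast
  ultimately show ?thesis by (rule invertible_if_inverse_exists)
qed

lemma colon_eq_mul_inverse:
  assumes R: "fractional_ideal A mR" and S: "fractional_ideal A mS"
  shows "{x. \<forall>m\<in>mR. x * m \<in> mS} = mul mS (frac_inv A mR)"
proof
  have Sm: "Amod mS" using S unfolding fractional_ideal_def by blast
  show "mul mS (frac_inv A mR) \<subseteq> {x. \<forall>m\<in>mR. x * m \<in> mS}"
  proof (rule mul_least)
    show "Amod {x. \<forall>m\<in>mR. x * m \<in> mS}"
      using Sm unfolding A_submodule_def by (simp add: distrib_right mult.assoc)
    fix s t assume st: "s \<in> mS" "t \<in> frac_inv A mR"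
    have "(t * m) * s \<in> mS" if "m \<in> mR" for m
      using st that Amod_closed(3)[OF Sm] unfolding frac_inv_def by blast
    then show "s * t \<in> {x. \<forall>m\<in>mR. x * m \<in> mS}" by (simp add: algebra_simps)
  qed
  show "{x. \<forall>m\<in>mR. x * m \<in> mS} \<subseteq> mul mS (frac_inv A mR)"
  proof
    fix x assume "x \<in> {x. \<forall>m\<in>mR. x * m \<in> mS}"
    then have x: "\<And>m. m \<in> mR \<Longrightarrow> x * m \<in> mS" by blast
    have one: "1 \<in> mul mR (frac_inv A mR)" using fractional_ideal_invertible[OF R] by simp
    have "x * 1 \<in> mul mS (frac_inv A mR)"
    proof (rule mul_induct[OF one, where Q="\<lambda>w. x * w \<in> mul mS (frac_inv A mR)"])
      show "Amod {w. x * w \<in> mul mS (frac_inv A mR)}"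
        using mul_submodule[of mS "frac_inv A mR"] unfolding A_submodule_def
        by (simp add: distrib_left mult.left_commute)
      fix m t assume "m \<in> mR" "t \<in> frac_inv A mR"
      then show "x * (m * t) \<in> mul mS (frac_inv A mR)"
        using mul_in x by (metis mult.assoc)
    qed
    then show "x \<in> mul mS (frac_inv A mR)" by simp
  qed
qed

end

section \<open>Coordinates and determinants of endomorphisms\<close>

definition basis_map :: "('a::field \<Rightarrow> 'b::ab_group_add \<Rightarrow> 'b) \<Rightarrow> (nat \<Rightarrow> 'b) \<Rightarrow> nat \<Rightarrow> (nat \<Rightarrow> 'b) \<Rightarrow> 'b \<Rightarrow> 'b" where
  "basis_map sc b n w = (\<lambda>x. \<Sum>k<n. sc (module.representation sc (b ` {..<n}) x (b k)) (w k))"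

lemma enumeration_extend:
  assumes fE: "finite E" and x: "inj_on x {..<r}" "x ` {..<r} \<subseteq> E"
  obtains e where "inj_on e {..<card E}" "e ` {..<card E} = E" "\<forall>k<r. e k = x k"
proof -
  let ?X = "x ` {..<r}" and ?n = "card E"
  have cX: "card ?X = r" using card_image[OF x(1)] by simp
  have cD: "card (E - ?X) = ?n - r" using card_Diff_subset[OF finite_subset[OF x(2) fE] x(2)] cX by simp
  have rle: "r \<le> ?n" using card_mono[OF fE x(2)] cX by simp
  obtain g where g: "bij_betw g {0..<card (E - ?X)} (E - ?X)"
    using ex_bij_betw_nat_finite[of "E - ?X"] fE by blast
  define e where "e k = (if k < r then x k else g (k - r))" for k
  have "e k \<in> E" if "k < ?n" for k
  proof (cases "k < r")
    case False
    then have "k - r \<in> {0..<card (E - ?X)}" using that cD by auto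
    then have "g (k - r) \<in> E - ?X" using g unfolding bij_betw_def by blast
    then show ?thesis using False unfolding e_def by simp
  qed (use x(2) in \<open>auto simp: e_def\<close>)
  moreover have "z \<in> e ` {..<?n}" if z: "z \<in> E" for z
  proof (cases "z \<in> ?X")
    case True
    then obtain k where "k < r" "z = x k" by blast
    then show ?thesis using rle unfolding e_def by (intro image_eqI[of _ _ k]) auto
  next
    case False
    then have "z \<in> g ` {0..<card (E - ?X)}" using z g unfolding bij_betw_def by blast
    then obtain j where j: "j < card (E - ?X)" "z = g j" by auto
    then have "j + r < ?n" "e (j + r) = z" using cD rle unfolding e_def by auto
    then show ?thesis by blast
  qed
  ultimately have img: "e ` {..<?n} = E" by blast
  then have "inj_on e {..<?n}" by (simp add: inj_on_iff_eq_card)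
  then show ?thesis using that img unfolding e_def by simp
qed

context vector_space
begin

lemma independent_card_le_dim:
  assumes G: "finite G" "W \<subseteq> span G" and B: "independent B" "B \<subseteq> W"
  shows "finite B" "card B \<le> dim W"
proof -
  obtain BB where BB: "BB \<subseteq> W" "independent BB" "W \<subseteq> span BB" "card BB = dim W"
    by (rule basis_exists)
  have "BB \<subseteq> span G" using BB(1) G(2) by blast
  then have fBB: "finite BB" using independent_span_bound[OF G(1) BB(2)] by blast
  have "B \<subseteq> span BB" using B(2) BB(3) by blast
  then have "finite B \<and> card B \<le> card BB" using independent_span_bound[OF fBB B(1)] by blast
  then show "finite B" "card B \<le> dim W" using BB(4) by auto
qed

lemma independent_dim_card_spans:
  assumes G: "finite G" "W \<subseteq> span G" and B: "independent B" "B \<subseteq> W" "card B = dim W"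
  shows "W \<subseteq> span B"
proof
  fix w assume w: "w \<in> W"
  show "w \<in> span B"
  proof (rule ccontr)
    assume nw: "w \<notin> span B"
    have fB: "finite B" using independent_card_le_dim(1)[OF G B(1,2)] .
    have i: "independent (insert w B)" using independent_insertI[OF nw B(1)] .
    have "w \<notin> B" using nw span_base by blast
    then have "card (insert w B) = card B + 1" using fB by simp
    moreover have "card (insert w B) \<le> dim W" using independent_card_le_dim(2)[OF G i] w B(2) by blast
    ultimately show False using B(3) by simp
  qed
qed

lemma indexed_basis_extend:
  assumes G: "finite G" "W \<subseteq> span G" and W: "subspace W"
    and x: "inj_on x {..<r}" "independent (x ` {..<r})" "x ` {..<r} \<subseteq> W"
  shows "\<exists>e. indexed_basis scale W (dim W) e \<and> (\<forall>k<r. e k = x k)"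
proof -
  obtain E where E: "x ` {..<r} \<subseteq> E" "E \<subseteq> W" "independent E" "W \<subseteq> span E"
    using maximal_independent_subset_extend[OF x(3) x(2)] by blast
  have fE: "finite E" using independent_card_le_dim(1)[OF G E(3,2)] .
  have cE: "card E = dim W" using basis_card_eq_dim[OF E(2,4,3)] .
  obtain e where e: "inj_on e {..<card E}" "e ` {..<card E} = E" "\<forall>k<r. e k = x k"
    using enumeration_extend[OF fE x(1) E(1)] by blast
  have "span E = W" using span_minimal[OF E(2) W] E(4) by blast
  then have "indexed_basis scale W (dim W) e" unfolding indexed_basis_def using e E(3) cE by auto
  then show ?thesis using e(3) by blast
qed

lemma indexed_basis_exists:
  assumes G: "finite G" "W \<subseteq> span G" and W: "subspace W"
  shows "\<exists>b. indexed_basis scale W (dim W) b"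
  using indexed_basis_extend[OF G W, of undefined 0] independent_empty by simp

lemma indexed_basisD:
  assumes "indexed_basis scale W n b"
  shows "inj_on b {..<n}" "independent (b ` {..<n})" "span (b ` {..<n}) = W" "subspace W"
    "\<And>k. k < n \<Longrightarrow> b k \<in> W"
  using assms unfolding indexed_basis_def by (auto intro: span_base)

lemma representation_basis_vector:
  assumes b: "indexed_basis scale W n b" and k: "k < n" and i: "i < n"
  shows "representation (b ` {..<n}) (b k) (b i) = (if i = k then 1 else 0)"
proof -
  note bp = indexed_basisD[OF b]
  have "representation (b ` {..<n}) (b k) = (\<lambda>v. if v = b k then 1 else 0)"
    using representation_basis[OF bp(2)] k by simp
  moreover have "b i = b k \<longleftrightarrow> i = k" using bp(1) i k by (auto dest: inj_onD)
  ultimately show ?thesis by simp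
qed

lemma representation_combination:
  assumes b: "indexed_basis scale W n b" and i: "i < n"
  shows "representation (b ` {..<n}) (\<Sum>k<n. c k *s b k) (b i) = c i"
proof -
  note bp = indexed_basisD[OF b]
  have "representation (b ` {..<n}) (\<Sum>k<n. c k *s b k) = (\<lambda>v. \<Sum>k<n. representation (b ` {..<n}) (c k *s b k) v)"
    using bp by (intro representation_sum) (auto intro: span_scale span_base)
  moreover have "representation (b ` {..<n}) (c k *s b k) (b i) = (if k = i then c k else 0)" if k: "k < n" for k
  proof -
    have bs: "b k \<in> span (b ` {..<n})" using k by (intro span_base) auto
    show ?thesis using representation_scale[OF bp(2) bs, of "c k"] representation_basis_vector[OF b k i] by simp
  qed
  ultimately have "representation (b ` {..<n}) (\<Sum>k<n. c k *s b k) (b i) = (\<Sum>k<n. if k = i then c k else 0)"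
    by (simp del: sum.delta)
  also have "\<dots> = c i" using i by simp
  finally show ?thesis .
qed

lemma basis_expansion:
  assumes b: "indexed_basis scale W n b" and v: "v \<in> W"
  shows "v = (\<Sum>k<n. representation (b ` {..<n}) v (b k) *s b k)"
proof -
  note bp = indexed_basisD[OF b]
  have "(\<Sum>bb\<in>b ` {..<n}. representation (b ` {..<n}) v bb *s bb) = v"
    using sum_representation_eq[OF bp(2)] v bp(3) by auto
  moreover have "(\<Sum>bb\<in>b ` {..<n}. representation (b ` {..<n}) v bb *s bb) = (\<Sum>k<n. representation (b ` {..<n}) v (b k) *s b k)"
    by (rule sum.reindex[OF bp(1), unfolded comp_def])
  ultimately show ?thesis by simp
qed

lemma representation_linear:
  assumes b: "indexed_basis scale W n b" and v: "\<And>k. k \<in> I \<Longrightarrow> v k \<in> W"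
  shows "representation (b ` {..<n}) (\<Sum>k\<in>I. c k *s v k) x = (\<Sum>k\<in>I. c k * representation (b ` {..<n}) (v k) x)"
proof -
  note bp = indexed_basisD[OF b]
  have "representation (b ` {..<n}) (\<Sum>k\<in>I. c k *s v k) = (\<lambda>y. \<Sum>k\<in>I. representation (b ` {..<n}) (c k *s v k) y)"
    using bp v by (intro representation_sum) (auto intro: span_scale)
  moreover have "representation (b ` {..<n}) (c k *s v k) = (\<lambda>y. c k * representation (b ` {..<n}) (v k) y)" if "k \<in> I" for k
    using representation_scale[OF bp(2)] v[OF that] bp(3) by auto
  ultimately show ?thesis by simp
qed

lemma endo_zero: "is_endo scale W u \<Longrightarrow> subspace W \<Longrightarrow> u 0 = 0"
  unfolding is_endo_def using subspace_0[of W] by (metis scale_zero_left)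

lemma endo_sum:
  assumes u: "is_endo scale W u" and W: "subspace W" and v: "\<And>k. k \<in> I \<Longrightarrow> v k \<in> W" and fI: "finite I"
  shows "u (\<Sum>k\<in>I. c k *s v k) = (\<Sum>k\<in>I. c k *s u (v k))"
  using fI v
proof (induction I rule: finite_induct)
  case empty then show ?case using endo_zero[OF u W] by simp
next
  case (insert j I)
  have s1: "c j *s v j \<in> W" using insert.prems W by (simp add: subspace_scale)
  have s2: "(\<Sum>k\<in>I. c k *s v k) \<in> W" using insert.prems W by (intro subspace_sum subspace_scale) auto
  have "u (\<Sum>k\<in>insert j I. c k *s v k) = u (c j *s v j + (\<Sum>k\<in>I. c k *s v k))" using insert by simp
  also have "\<dots> = u (c j *s v j) + u (\<Sum>k\<in>I. c k *s v k)" using u s1 s2 unfolding is_endo_def by blast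
  also have "u (c j *s v j) = c j *s u (v j)" using u insert.prems unfolding is_endo_def by simp
  finally show ?case using insert by simp
qed

lemma basis_map_endo:
  assumes b: "indexed_basis scale W n b" and w: "\<And>k. k < n \<Longrightarrow> w k \<in> W"
  shows "is_endo scale W (basis_map scale b n w)"
proof -
  note bp = indexed_basisD[OF b]
  have "basis_map scale b n w x \<in> W" for x unfolding basis_map_def using w bp(4) by (intro subspace_sum subspace_scale) auto
  moreover have "basis_map scale b n w (x + y) = basis_map scale b n w x + basis_map scale b n w y" if "x \<in> W" "y \<in> W" for x y
    using representation_add[OF bp(2), of y x] that bp(3)
    by (simp add: basis_map_def scale_left_distrib sum.distrib)
  moreover have "basis_map scale b n w (c *s x) = c *s basis_map scale b n w x" if "x \<in> W" for c x
    using representation_scale[OF bp(2), of x c] that bp(3)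
    by (simp add: basis_map_def scale_sum_right)
  ultimately show ?thesis unfolding is_endo_def by blast
qed

lemma basis_map_combination:
  assumes b: "indexed_basis scale W n b"
  shows "basis_map scale b n w (\<Sum>k<n. c k *s b k) = (\<Sum>k<n. c k *s w k)"
  unfolding basis_map_def using representation_combination[OF b] by simp

lemma basis_map_basis:
  assumes b: "indexed_basis scale W n b" and j: "j < n"
  shows "basis_map scale b n w (b j) = w j"
proof -
  have "(\<Sum>k<n. representation (b ` {..<n}) (b j) (b k) *s w k) = (\<Sum>k<n. if k = j then w k else 0)"
    by (intro sum.cong refl) (use representation_basis_vector[OF b j] in auto)
  also have "\<dots> = w j" using j by simp
  finally show ?thesis unfolding basis_map_def .
qed

lemma coord_matrix_comp:
  assumes b: "indexed_basis scale W n b" and c: "indexed_basis scale W n c"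
    and u: "is_endo scale W u" and w: "\<And>j. j < n \<Longrightarrow> w j \<in> W"
    and i: "i < n" and j: "j < n"
  shows "coord_matrix scale n b (\<lambda>j. u (w j)) i j
       = matmul n (coord_matrix scale n b (\<lambda>j. u (c j))) (coord_matrix scale n c w) i j"
proof -
  note bp = indexed_basisD[OF b] and cp = indexed_basisD[OF c]
  let ?C = "\<lambda>k. representation (c ` {..<n}) (w j) (c k)"
  have "w j = (\<Sum>k<n. ?C k *s c k)" by (rule basis_expansion[OF c w[OF j]])
  then have "u (w j) = (\<Sum>k<n. ?C k *s u (c k))"
    using endo_sum[OF u bp(4), of "{..<n}" c ?C] cp(5) by simp
  moreover have "u (c k) \<in> W" if "k < n" for k using u cp(5)[OF that] unfolding is_endo_def by blast
  ultimately have "representation (b ` {..<n}) (u (w j)) (b i) = (\<Sum>k<n. ?C k * representation (b ` {..<n}) (u (c k)) (b i))"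
    using representation_linear[OF b, of "{..<n}" "\<lambda>k. u (c k)" ?C "b i"] by simp
  then show ?thesis unfolding coord_matrix_def matmul_def by (simp add: mult.commute)
qed

lemma coord_matrix_self:
  assumes b: "indexed_basis scale W n b" and i: "i < n" and j: "j < n"
  shows "coord_matrix scale n b b i j = (if i = j then 1 else 0)"
  unfolding coord_matrix_def using representation_basis_vector[OF b j i] by simp

lemma endo_id: "subspace W \<Longrightarrow> is_endo scale W id"
  unfolding is_endo_def by simp

lemma lz_det_coord_comp:
  assumes b: "indexed_basis scale W n b" and c: "indexed_basis scale W n c"
    and u: "is_endo scale W u" and w: "\<And>j. j < n \<Longrightarrow> w j \<in> W"
  shows "lz_det n (coord_matrix scale n b (\<lambda>j. u (w j)))
       = lz_det n (coord_matrix scale n b (\<lambda>j. u (c j))) * lz_det n (coord_matrix scale n c w)"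
  by (subst lz_det_mult[symmetric], rule lz_det_cong) (rule coord_matrix_comp[OF b c u w])

lemma lz_det_change_of_basis:
  assumes b: "indexed_basis scale W n b" and c: "indexed_basis scale W n c"
  shows "lz_det n (coord_matrix scale n b c) * lz_det n (coord_matrix scale n c b) = 1"
proof -
  note bp = indexed_basisD[OF b]
  have "lz_det n (coord_matrix scale n b b) = 1"
    using coord_matrix_self[OF b] by (rule lz_det_identity)
  then show ?thesis using lz_det_coord_comp[OF b c endo_id[OF bp(4)] bp(5)] by simp
qed

lemma lz_det_coord_basis_indep:
  assumes b: "indexed_basis scale W n b" and c: "indexed_basis scale W n c" and u: "is_endo scale W u"
  shows "lz_det n (coord_matrix scale n c (\<lambda>j. u (c j))) = lz_det n (coord_matrix scale n b (\<lambda>j. u (b j)))"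
proof -
  note bp = indexed_basisD[OF b] and cp = indexed_basisD[OF c]
  have uW: "u (b j) \<in> W" if "j < n" for j using u bp(5)[OF that] unfolding is_endo_def by blast
  have "lz_det n (coord_matrix scale n c (\<lambda>j. u (c j)))
      = lz_det n (coord_matrix scale n c (\<lambda>j. u (b j))) * lz_det n (coord_matrix scale n b c)"
    by (rule lz_det_coord_comp[OF c b u cp(5)])
  also have "lz_det n (coord_matrix scale n c (\<lambda>j. u (b j)))
      = lz_det n (coord_matrix scale n c b) * lz_det n (coord_matrix scale n b (\<lambda>j. u (b j)))"
    using lz_det_coord_comp[OF c b endo_id[OF bp(4)] uW] by simp
  finally show ?thesis using lz_det_change_of_basis[OF b c] by (simp add: algebra_simps)
qed

lemma endo_det_in_basis:
  assumes b: "indexed_basis scale W (dim W) b" and u: "is_endo scale W u"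
  shows "endo_det scale W u = lz_det (dim W) (coord_matrix scale (dim W) b (\<lambda>j. u (b j)))"
proof -
  let ?c = "SOME b. indexed_basis scale W (dim W) b"
  have c: "indexed_basis scale W (dim W) ?c" using someI[of "\<lambda>b. indexed_basis scale W (dim W) b", OF b] .
  show ?thesis unfolding endo_det_def Let_def using lz_det_coord_basis_indep[OF b c u] by simp
qed

lemma endo_det_two_bases:
  assumes b: "indexed_basis scale W (dim W) b" and c: "indexed_basis scale W (dim W) c"
    and u: "is_endo scale W u"
  shows "endo_det scale W u = lz_det (dim W) (coord_matrix scale (dim W) b c)
                             * lz_det (dim W) (coord_matrix scale (dim W) c (\<lambda>j. u (b j)))"
proof -
  note bp = indexed_basisD[OF b]
  have uW: "u (b j) \<in> W" if "j < dim W" for j using u bp(5)[OF that] unfolding is_endo_def by blast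
  show ?thesis
    using endo_det_in_basis[OF b u] lz_det_coord_comp[OF b c endo_id[OF bp(4)] uW] by simp
qed

lemma endo_det_scaled_basis_map:
  fixes t :: 'a
  assumes e: "indexed_basis scale W (dim W) e" and f: "indexed_basis scale W (dim W) f"
    and j: "j < dim W"
  shows "is_endo scale W (basis_map scale e (dim W) (\<lambda>k. if k = j then t *s f k else f k))"
    and "endo_det scale W (basis_map scale e (dim W) (\<lambda>k. if k = j then t *s f k else f k))
           = t * lz_det (dim W) (coord_matrix scale (dim W) e f)"
proof -
  let ?N = "dim W"
  let ?u = "basis_map scale e ?N (\<lambda>k. if k = j then t *s f k else f k)"
  note ep = indexed_basisD[OF e] and fp = indexed_basisD[OF f]
  show ue: "is_endo scale W ?u"
    using fp(4,5) by (intro basis_map_endo[OF e]) (auto intro: subspace_scale)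
  have "endo_det scale W ?u = lz_det ?N (coord_matrix scale ?N e (\<lambda>k. ?u (e k)))"
    by (rule endo_det_in_basis[OF e ue])
  also have "\<dots> = lz_det ?N (\<lambda>i k. coord_matrix scale ?N e f i k * (if k = j then t else 1))"
  proof (rule lz_det_cong)
    fix i k assume ik: "i < ?N" "k < ?N"
    have "f k \<in> span (e ` {..<?N})" using fp(5)[OF ik(2)] ep(3) by simp
    then have "representation (e ` {..<?N}) (t *s f k) (e i) = t * representation (e ` {..<?N}) (f k) (e i)"
      using representation_scale[OF ep(2)] by simp
    then show "coord_matrix scale ?N e (\<lambda>k. ?u (e k)) i k = coord_matrix scale ?N e f i k * (if k = j then t else 1)"
      unfolding coord_matrix_def using basis_map_basis[OF e ik(2)]
      by (cases "k = j") (simp_all add: mult.commute)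
  qed
  also have "\<dots> = lz_det ?N (coord_matrix scale ?N e f) * (\<Prod>k<?N. if k = j then t else 1)"
    by (rule lz_det_scale_cols)
  also have "(\<Prod>k<?N. if k = j then t else 1) = t" using j by (simp add: prod.If_cases)
  finally show "endo_det scale W ?u = t * lz_det ?N (coord_matrix scale ?N e f)" by simp
qed

lemma endo_injective_if_det_nonzero:
  assumes b: "indexed_basis scale W n b" and u: "is_endo scale W u"
    and d: "lz_det n (coord_matrix scale n b (\<lambda>j. u (b j))) \<noteq> 0"
    and x: "x \<in> W" "u x = 0"
  shows "x = 0"
proof -
  note bp = indexed_basisD[OF b]
  let ?c = "\<lambda>k. representation (b ` {..<n}) x (b k)"
  have xe: "x = (\<Sum>k<n. ?c k *s b k)" by (rule basis_expansion[OF b x(1)])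
  then have "u x = (\<Sum>k<n. ?c k *s u (b k))"
    using endo_sum[OF u bp(4), of "{..<n}" b ?c] bp(5) by simp
  moreover have uW: "u (b k) \<in> W" if "k < n" for k using u bp(5)[OF that] unfolding is_endo_def by blast
  ultimately have "representation (b ` {..<n}) (u x) (b i) = (\<Sum>k<n. ?c k * representation (b ` {..<n}) (u (b k)) (b i))" for i
    using representation_linear[OF b, of "{..<n}" "\<lambda>k. u (b k)" ?c "b i"] by simp
  then have "(\<Sum>k<n. coord_matrix scale n b (\<lambda>j. u (b j)) i k * ?c k) = 0" for i
    using x(2) representation_zero unfolding coord_matrix_def by (simp add: mult.commute)
  then have "?c k = 0" if "k < n" for k using lz_det_kernel[OF d, of ?c k] that by blast
  then show ?thesis using xe by simp
qed

lemma endo_det_zero_if_kernel: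
  assumes G: "finite G" "W \<subseteq> span G" and W: "subspace W" and u: "is_endo scale W u"
    and x: "x \<in> W" "x \<noteq> 0" "u x = 0"
  shows "endo_det scale W u = 0"
proof -
  obtain b where b: "indexed_basis scale W (dim W) b" using indexed_basis_exists[OF G W] by blast
  show ?thesis
  proof (rule ccontr)
    assume "endo_det scale W u \<noteq> 0"
    then have "lz_det (dim W) (coord_matrix scale (dim W) b (\<lambda>j. u (b j))) \<noteq> 0"
      using endo_det_in_basis[OF b u] by simp
    then have "x = 0" using endo_injective_if_det_nonzero[OF b u _ x(1,3)] by blast
    then show False using x(2) by simp
  qed
qed

lemma endo_span_image:
  assumes W: "subspace W" and u: "is_endo scale W u" and R: "R \<subseteq> W" "u ` R \<subseteq> S"
  shows "u ` span R \<subseteq> span S"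
proof
  fix z assume "z \<in> u ` span R"
  then obtain x where x: "x \<in> span R" "z = u x" by blast
  then obtain t r where t: "finite t" "t \<subseteq> R" "x = (\<Sum>a\<in>t. r a *s a)" unfolding span_explicit by blast
  have "u x = (\<Sum>a\<in>t. r a *s u a)"
    unfolding t(3) using endo_sum[OF u W, of t "\<lambda>a. a" r] t R(1) by blast
  also have "\<dots> \<in> span S" using t R(2) by (intro span_sum span_scale span_base) blast
  finally show "z \<in> span S" using x(2) by simp
qed

lemma endo_diff:
  assumes W: "subspace W" and u: "is_endo scale W u" and xy: "x \<in> W" "y \<in> W"
  shows "u (x - y) = u x - u y"
proof -
  have "(-1) *s y \<in> W" using W xy(2) by (rule subspace_scale)
  then have "u (x + (-1) *s y) = u x + u ((-1) *s y)" using u xy(1) unfolding is_endo_def by blast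
  also have "u ((-1) *s y) = (-1) *s u y" using u xy(2) unfolding is_endo_def by blast
  finally show ?thesis by (simp add: scale_minus_left)
qed

lemma injective_endo_image_independent:
  assumes W: "subspace W" and u: "is_endo scale W u" and inj: "\<And>x. x \<in> W \<Longrightarrow> u x = 0 \<Longrightarrow> x = 0"
    and B: "B \<subseteq> W" "finite B" "independent B"
  shows "independent (u ` B)" "card (u ` B) = card B"
proof -
  have injB: "inj_on u B"
  proof (rule inj_onI)
    fix x y assume xy: "x \<in> B" "y \<in> B" "u x = u y"
    have "x \<in> W" "y \<in> W" using xy B(1) by auto
    then have "u (x - y) = u x - u y" by (rule endo_diff[OF W u])
    then have "u (x - y) = 0" using xy(3) by simp
    moreover have "x - y \<in> W" using xy B(1) W by (auto intro: subspace_diff)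
    ultimately have "x - y = 0" using inj by blast
    then show "x = y" by simp
  qed
  then show "card (u ` B) = card B" by (rule card_image)
  show "independent (u ` B)"
  proof (rule independent_if_scalars_zero)
    show "finite (u ` B)" using B(2) by simp
    fix f z assume sum0: "(\<Sum>y\<in>u ` B. f y *s y) = 0" and z: "z \<in> u ` B"
    have "(\<Sum>y\<in>u ` B. f y *s y) = (\<Sum>b\<in>B. f (u b) *s u b)"
      using sum.reindex[OF injB, of "\<lambda>y. f y *s y"] by simp
    also have "\<dots> = u (\<Sum>b\<in>B. f (u b) *s b)"
    proof -
      have "\<And>k. k \<in> B \<Longrightarrow> k \<in> W" using B(1) by blast
      from endo_sum[OF u W this B(2), where c="\<lambda>b. f (u b)"] show ?thesis by simp
    qed
    finally have "u (\<Sum>b\<in>B. f (u b) *s b) = 0" using sum0 by simp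
    moreover have "(\<Sum>b\<in>B. f (u b) *s b) \<in> W" using B(1) W by (intro subspace_sum subspace_scale) auto
    ultimately have "(\<Sum>b\<in>B. f (u b) *s b) = 0" using inj by blast
    then have "\<forall>b\<in>B. f (u b) = 0" using independentD[OF B(3) B(2) order_refl, of "\<lambda>b. f (u b)"] by blast
    then show "f z = 0" using z by blast
  qed
qed

end

section \<open>A-spans, ranks and denominators of lattices\<close>

context vector_space
begin

lemma A_span_mem: "x \<in> A_span A scale G \<longleftrightarrow> (\<exists>c. (\<forall>g\<in>G. c g \<in> A) \<and> x = (\<Sum>g\<in>G. c g *s g))"
  unfolding A_span_def by blast

lemma A_span_submodule:
  assumes sub: "is_subring A"
  shows "A_submodule A scale (A_span A scale G)"
proof -
  interpret field_subring A by (unfold_locales) (rule sub)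
  show ?thesis unfolding A_submodule_def
  proof (intro conjI ballI)
    have "(\<Sum>g\<in>G. 0 *s g) = 0" by simp
    then show "0 \<in> A_span A scale G" unfolding A_span_mem by (intro exI[of _ "\<lambda>_. 0"]) simp
  next
    fix x y assume "x \<in> A_span A scale G" "y \<in> A_span A scale G"
    then obtain c c' where c: "\<forall>g\<in>G. c g \<in> A" "x = (\<Sum>g\<in>G. c g *s g)"
      and c': "\<forall>g\<in>G. c' g \<in> A" "y = (\<Sum>g\<in>G. c' g *s g)" unfolding A_span_mem by blast
    have "x + y = (\<Sum>g\<in>G. (c g + c' g) *s g)" unfolding c c' by (simp add: scale_left_distrib sum.distrib)
    then show "x + y \<in> A_span A scale G" unfolding A_span_mem using c c' Aadd
      by (intro exI[of _ "\<lambda>g. c g + c' g"]) simp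
  next
    fix a x assume a: "a \<in> A" and "x \<in> A_span A scale G"
    then obtain c where c: "\<forall>g\<in>G. c g \<in> A" "x = (\<Sum>g\<in>G. c g *s g)" unfolding A_span_mem by blast
    have "a *s x = (\<Sum>g\<in>G. (a * c g) *s g)" unfolding c by (simp add: scale_sum_right)
    then show "a *s x \<in> A_span A scale G" unfolding A_span_mem using c a Amult
      by (intro exI[of _ "\<lambda>g. a * c g"]) simp
  qed
qed

lemma A_submodule_scale: "A_submodule A scale M \<Longrightarrow> a \<in> A \<Longrightarrow> x \<in> M \<Longrightarrow> a *s x \<in> M"
  and A_submodule_add: "A_submodule A scale M \<Longrightarrow> x \<in> M \<Longrightarrow> y \<in> M \<Longrightarrow> x + y \<in> M"
  unfolding A_submodule_def by blast+

lemma A_span_subset_span: "A_span A scale G \<subseteq> span G"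
  unfolding A_span_def by (auto intro: span_sum span_scale span_base)

lemma A_span_insert_split:
  assumes "finite G" "g \<notin> G" "\<forall>i\<in>I. f i \<in> A_span A scale (insert g G)"
  obtains a y where "\<forall>i\<in>I. a i \<in> A \<and> y i \<in> A_span A scale G \<and> f i = a i *s g + y i"
proof -
  have "\<forall>i\<in>I. \<exists>ay. fst ay \<in> A \<and> snd ay \<in> A_span A scale G \<and> f i = fst ay *s g + snd ay"
  proof
    fix i assume i: "i \<in> I"
    obtain c where c: "\<forall>h\<in>insert g G. c h \<in> A" "f i = (\<Sum>h\<in>insert g G. c h *s h)"
      using assms(3) i unfolding A_span_mem by blast
    have "f i = c g *s g + (\<Sum>h\<in>G. c h *s h)" using c(2) assms(1,2) by simp
    moreover have "(\<Sum>h\<in>G. c h *s h) \<in> A_span A scale G" unfolding A_span_mem using c(1) by blast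
    ultimately show "\<exists>ay. fst ay \<in> A \<and> snd ay \<in> A_span A scale G \<and> f i = fst ay *s g + snd ay"
      using c(1) by (intro exI[of _ "(c g, \<Sum>h\<in>G. c h *s h)"]) simp
  qed
  then obtain ay where "\<forall>i\<in>I. fst (ay i) \<in> A \<and> snd (ay i) \<in> A_span A scale G \<and> f i = fst (ay i) *s g + snd (ay i)"
    by (rule bchoice[elim_format]) blast
  then show ?thesis using that[of "\<lambda>i. fst (ay i)" "\<lambda>i. snd (ay i)"] by blast
qed

lemma relation_from_eliminated:
  assumes sub: "is_subring A" and I: "finite I" "i0 \<in> I" and a: "\<And>i. i \<in> I \<Longrightarrow> a i \<in> A" "a i0 \<noteq> 0"
    and c': "\<forall>i\<in>I - {i0}. c' i \<in> A" "(\<Sum>i\<in>I - {i0}. c' i *s (a i0 *s f i - a i *s f i0)) = 0"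
      "\<exists>i\<in>I - {i0}. c' i \<noteq> 0"
  shows "\<exists>c. (\<forall>i\<in>I. c i \<in> A) \<and> (\<Sum>i\<in>I. c i *s f i) = 0 \<and> (\<exists>i\<in>I. c i \<noteq> 0)"
proof -
  interpret field_subring A by (unfold_locales) (rule sub)
  let ?I' = "I - {i0}"
  define c where "c i = (if i = i0 then - (\<Sum>j\<in>?I'. c' j * a j) else c' i * a i0)" for i
  have "(\<Sum>i\<in>I. c i *s f i) = c i0 *s f i0 + (\<Sum>i\<in>?I'. (c' i * a i0) *s f i)"
    using I by (simp add: sum.remove c_def)
  also have "\<dots> = (\<Sum>i\<in>?I'. c' i *s (a i0 *s f i - a i *s f i0))"
    by (simp add: c_def scale_right_diff_distrib sum_subtractf scale_sum_left)
  finally have "(\<Sum>i\<in>I. c i *s f i) = 0" using c'(2) by simp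
  moreover have "\<forall>i\<in>I. c i \<in> A"
  proof
    fix i assume "i \<in> I"
    have "(\<Sum>j\<in>?I'. c' j * a j) \<in> A"
      using c'(1) a(1) by (intro A_submodule_sum[OF Amod_A] Amult) auto
    then show "c i \<in> A" using \<open>i \<in> I\<close> c'(1) a Aneg Amult I(2) unfolding c_def by auto
  qed
  moreover have "\<exists>i\<in>I. c i \<noteq> 0" using c'(3) a(2) unfolding c_def by auto
  ultimately show ?thesis by blast
qed

text \<open>More than card G elements of the A-span of G are A-linearly dependent (by induction on
  G, eliminating one generator as in Gaussian elimination).\<close>
lemma A_span_dependent:
  assumes sub: "is_subring A" and G: "finite G"
  shows "finite I \<Longrightarrow> (\<forall>i\<in>I. f i \<in> A_span A scale G) \<Longrightarrow> card G < card I \<Longrightarrow>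
     \<exists>c. (\<forall>i\<in>I. c i \<in> A) \<and> (\<Sum>i\<in>I. c i *s f i) = 0 \<and> (\<exists>i\<in>I. c i \<noteq> 0)"
  using G
proof (induction G arbitrary: I f rule: finite_induct)
  case empty
  interpret field_subring A by (unfold_locales) (rule sub)
  have "I \<noteq> {}" using empty.prems(3) by auto
  then obtain i0 where i0: "i0 \<in> I" by blast
  have "f i = 0" if "i \<in> I" for i using empty.prems(2) that unfolding A_span_mem by simp
  then have "(\<Sum>i\<in>I. (if i = i0 then 1 else 0) *s f i) = 0" by (simp add: sum.neutral)
  then show ?case using i0 by (intro exI[of _ "\<lambda>i. if i = i0 then 1 else 0"]) auto
next
  case (insert g G)
  interpret field_subring A by (unfold_locales) (rule sub)
  note AG = A_span_submodule[OF sub, of G]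
  obtain a y where ay0: "\<forall>i\<in>I. a i \<in> A \<and> y i \<in> A_span A scale G \<and> f i = a i *s g + y i"
    using A_span_insert_split[OF insert.hyps insert.prems(2)] by blast
  then have ay: "a i \<in> A \<and> y i \<in> A_span A scale G \<and> f i = a i *s g + y i" if "i \<in> I" for i
    using that by blast
  have cardI: "card G + 1 < card I" using insert.prems(3) insert.hyps by simp
  show ?case
  proof (cases "\<forall>i\<in>I. a i = 0")
    case True
    then have "\<forall>i\<in>I. f i \<in> A_span A scale G" using ay by simp
    then show ?thesis using insert.IH[OF insert.prems(1)] cardI by simp
  next
    case False
    then obtain i0 where i0: "i0 \<in> I" "a i0 \<noteq> 0" by blast
    define f' where "f' i = a i0 *s f i - a i *s f i0" for i
    have "f' i \<in> A_span A scale G" if i: "i \<in> I" for i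
    proof -
      have "a i0 *s y i \<in> A_span A scale G" "(- a i) *s y i0 \<in> A_span A scale G"
        using ay[OF i] ay[OF i0(1)] A_submodule_scale[OF AG] Aneg by blast+
      then have "a i0 *s y i + (- a i) *s y i0 \<in> A_span A scale G" using A_submodule_add[OF AG] by blast
      moreover have "f' i = a i0 *s y i + (- a i) *s y i0"
        unfolding f'_def using ay[OF i] ay[OF i0(1)]
        by (simp add: scale_right_distrib scale_left_commute[of "a i0" "a i"] scale_minus_left)
      ultimately show ?thesis by simp
    qed
    moreover have "card G < card (I - {i0})" using cardI i0(1) insert.prems(1) by simp
    ultimately obtain c' where c': "\<forall>i\<in>I - {i0}. c' i \<in> A" "(\<Sum>i\<in>I - {i0}. c' i *s f' i) = 0"
      "\<exists>i\<in>I - {i0}. c' i \<noteq> 0"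
      using insert.IH[of "I - {i0}" f'] insert.prems(1) by blast
    have aA: "\<And>i. i \<in> I \<Longrightarrow> a i \<in> A" using ay by blast
    show ?thesis
      by (rule relation_from_eliminated[OF sub insert.prems(1) i0(1) aA i0(2) c'(1) c'(2)[unfolded f'_def] c'(3)])
  qed
qed

lemma A_rank_ge:
  assumes sub: "is_subring A" and G: "finite G" "R = A_span A scale G"
    and X: "X \<subseteq> R" "finite X" "A_indep A scale X"
  shows "card X \<le> A_rank A scale R"
proof -
  let ?C = "{card X | X. X \<subseteq> R \<and> finite X \<and> A_indep A scale X}"
  have "card Y \<le> card G" if Y: "Y \<subseteq> R" "finite Y" "A_indep A scale Y" for Y
  proof (rule ccontr)
    assume "\<not> card Y \<le> card G"
    then obtain c where "\<forall>i\<in>Y. c i \<in> A" "(\<Sum>i\<in>Y. c i *s i) = 0" "\<exists>i\<in>Y. c i \<noteq> 0"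
      using A_span_dependent[OF sub G(1) Y(2), of "\<lambda>x. x"] Y(1) G(2) by auto
    then show False using Y(2,3) unfolding A_indep_def by blast
  qed
  then have "?C \<subseteq> {..card G}" by auto
  then have "finite ?C" using finite_subset by blast
  moreover have "card X \<in> ?C" using X by blast
  ultimately show ?thesis unfolding A_rank_def by (rule le_cSup_finite)
qed

lemma multiple_in_A_span:
  assumes sub: "is_subring A" and B: "finite B" "independent B" and g: "g \<notin> B"
    and dep: "\<not> A_indep A scale (insert g B)"
  shows "\<exists>e\<in>A. e \<noteq> 0 \<and> e *s g \<in> A_span A scale B"
proof -
  interpret field_subring A by (unfold_locales) (rule sub)
  obtain Gs c where Gs: "finite Gs" "Gs \<subseteq> insert g B" "\<forall>h\<in>Gs. c h \<in> A" "(\<Sum>h\<in>Gs. c h *s h) = 0"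
    and nz: "\<exists>h\<in>Gs. c h \<noteq> 0" using dep unfolding A_indep_def by blast
  let ?Gs' = "Gs - {g}"
  have sub': "?Gs' \<subseteq> B" using Gs(2) by blast
  have gin: "g \<in> Gs \<and> c g \<noteq> 0"
  proof (rule ccontr)
    assume no: "\<not> (g \<in> Gs \<and> c g \<noteq> 0)"
    then have "(\<Sum>h\<in>Gs. c h *s h) = (\<Sum>h\<in>?Gs'. c h *s h)"
      using Gs(1) by (cases "g \<in> Gs") (auto simp: sum.remove)
    then have "(\<Sum>h\<in>?Gs'. c h *s h) = 0" using Gs(4) by simp
    then have "\<forall>h\<in>?Gs'. c h = 0" using independentD[OF B(2)] Gs(1) sub' by blast
    then show False using nz no by blast
  qed
  have "(\<Sum>h\<in>Gs. c h *s h) = c g *s g + (\<Sum>h\<in>?Gs'. c h *s h)"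
    using Gs(1) gin by (intro sum.remove) auto
  then have "0 = c g *s g + (\<Sum>h\<in>?Gs'. c h *s h)" using Gs(4) by simp
  then have "c g *s g = (\<Sum>h\<in>?Gs'. (- c h) *s h)"
    by (simp add: scale_minus_left sum_negf eq_neg_iff_add_eq_0)
  also have "\<dots> = (\<Sum>b\<in>B. (if b \<in> ?Gs' then - c b else 0) *s b)"
    using B(1) sub' by (intro sum.mono_neutral_cong_left) auto
  finally have "c g *s g \<in> A_span A scale B"
    unfolding A_span_mem using Gs(3) Aneg by (intro exI[of _ "\<lambda>b. if b \<in> ?Gs' then - c b else 0"]) auto
  then show ?thesis using gin Gs(3) by blast
qed

text \<open>If every generator g \<in> G has a nonzero multiple in the A-submodule M, then some d \<noteq> 0
  in A (the product of these multipliers) maps the whole A-span of G into M.\<close>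
lemma common_multiplier:
  assumes sub: "is_subring A" and M: "A_submodule A scale M" and G: "finite G"
    and mult: "\<forall>g\<in>G. \<exists>e\<in>A. e \<noteq> 0 \<and> e *s g \<in> M"
  shows "\<exists>d\<in>A. d \<noteq> 0 \<and> (\<forall>r\<in>A_span A scale G. d *s r \<in> M)"
proof -
  interpret field_subring A by (unfold_locales) (rule sub)
  have "\<forall>g\<in>G. \<exists>e. e \<in> A \<and> e \<noteq> 0 \<and> e *s g \<in> M" using mult by blast
  then obtain e where e: "\<forall>g\<in>G. e g \<in> A \<and> e g \<noteq> 0 \<and> e g *s g \<in> M"
    by (rule bchoice[elim_format]) blast
  define d where "d = (\<Prod>g\<in>G. e g)"
  have dg: "d *s g \<in> M" if g: "g \<in> G" for g
  proof -
    have "d = e g * (\<Prod>h\<in>G - {g}. e h)" unfolding d_def using G g by (simp add: prod.remove)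
    then have deq: "d *s g = (\<Prod>h\<in>G - {g}. e h) *s (e g *s g)" by (simp add: mult.commute)
    have "(\<Prod>h\<in>G - {g}. e h) \<in> A" by (rule Aprod) (use e in blast)
    then have "(\<Prod>h\<in>G - {g}. e h) *s (e g *s g) \<in> M"
      using A_submodule_scale[OF M] e g by blast
    then show ?thesis by (simp only: deq)
  qed
  have "d *s r \<in> M" if r: "r \<in> A_span A scale G" for r
  proof -
    obtain c where c: "\<forall>g\<in>G. c g \<in> A" "r = (\<Sum>g\<in>G. c g *s g)" using r unfolding A_span_mem by blast
    have "d *s r = (\<Sum>g\<in>G. c g *s (d *s g))" unfolding c(2) by (simp add: scale_sum_right mult.commute)
    also have "\<dots> \<in> M"
      using A_submodule_scale[OF M] c(1) dg by (intro A_submodule_sum[OF M]) blast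
    finally show ?thesis .
  qed
  moreover have "d \<in> A" unfolding d_def by (rule Aprod) (use e in blast)
  moreover have "d \<noteq> 0" unfolding d_def using e G by simp
  ultimately show ?thesis by blast
qed

text \<open>Each generator of R has a nonzero multiple in
  the A-span of BR since R has rank card BR, so common_multiplier applies.\<close>
lemma lattice_denominator:
  assumes sub: "is_subring A" and L: "A_lattice A scale R"
    and BR: "BR \<subseteq> R" "independent BR" "R \<subseteq> span BR"
  shows "\<exists>d\<in>A. d \<noteq> 0 \<and> (\<forall>r\<in>R. d *s r \<in> A_span A scale BR)"
proof -
  interpret field_subring A by (unfold_locales) (rule sub)
  obtain G where G: "finite G" "G \<subseteq> R" "R = A_span A scale G"
    using L unfolding A_lattice_def A_fin_gen_def by blast
  have "BR \<subseteq> span G" using BR(1) G(3) A_span_subset_span by blast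
  then have fBR: "finite BR" using independent_span_bound[OF G(1) BR(2)] by simp
  have sRB: "span R \<subseteq> span BR" using span_mono[OF BR(3)] by (simp add: span_span)
  have "BR \<subseteq> span R" using BR(1) span_superset[of R] by (rule order_trans)
  then have "card BR = dim (span R)" by (rule basis_card_eq_dim[OF _ sRB BR(2)])
  then have cBR: "card BR = A_rank A scale R" using L unfolding A_lattice_def by simp
  note ABR = A_span_submodule[OF sub, of BR]
  have "\<exists>e\<in>A. e \<noteq> 0 \<and> e *s g \<in> A_span A scale BR" if g: "g \<in> R" for g
  proof (cases "g \<in> BR")
    case True
    have "(\<Sum>b\<in>BR. (if b = g then 1 else 0) *s b) = (\<Sum>b\<in>BR. if b = g then b else 0)"
      by (intro sum.cong) auto
    also have "\<dots> = g" using True fBR by simp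
    finally have "(\<Sum>b\<in>BR. (if b = g then 1 else 0) *s b) = g" .
    then have "1 *s g \<in> A_span A scale BR" unfolding A_span_mem
      by (intro exI[of _ "\<lambda>b. if b = g then 1 else 0"]) simp
    then show ?thesis using A1 by (intro bexI[of _ 1]) simp_all
  next
    case False
    have "card (insert g BR) = card BR + 1" using False fBR by simp
    then have "\<not> A_indep A scale (insert g BR)"
      using A_rank_ge[OF sub G(1,3), of "insert g BR"] g BR(1) fBR cBR by auto
    then show ?thesis using multiple_in_A_span[OF sub fBR BR(2) False] by blast
  qed
  then have "\<forall>g\<in>G. \<exists>e\<in>A. e \<noteq> 0 \<and> e *s g \<in> A_span A scale BR" using G(2) by blast
  then show ?thesis using common_multiplier[OF sub ABR G(1)] G(3) by simp
qed

end

section \<open>The index module when the spans differ\<close>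

context vector_space
begin

lemma index_module_unfold:
  "index_module scale R S = {endo_det scale (span (R \<union> S)) u | u. is_endo scale (span (R \<union> S)) u \<and> u ` R \<subseteq> S}"
  unfolding index_module_def Let_def span_Un[symmetric] by simp

lemma lattices_finite_span:
  assumes "A_lattice A scale R" "A_lattice A scale S"
  obtains G where "finite G" "span (R \<union> S) \<subseteq> span G"
proof -
  obtain GR GS where "finite GR" "R = A_span A scale GR" "finite GS" "S = A_span A scale GS"
    using assms unfolding A_lattice_def A_fin_gen_def by metis
  moreover have "R \<subseteq> span GR" "S \<subseteq> span GS"
    unfolding \<open>R = A_span A scale GR\<close> \<open>S = A_span A scale GS\<close> by (rule A_span_subset_span)+
  ultimately have "finite (GR \<union> GS)" "R \<union> S \<subseteq> span (GR \<union> GS)"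
    using span_mono[of GR "GR \<union> GS"] span_mono[of GS "GR \<union> GS"] by auto
  then show ?thesis using that span_minimal[of "R \<union> S" "span (GR \<union> GS)"] by auto
qed

lemma basis_inside:
  assumes G: "finite G" "span X \<subseteq> span G"
  obtains B where "B \<subseteq> X" "independent B" "X \<subseteq> span B" "finite B" "card B = dim (span X)"
proof -
  obtain B where B: "B \<subseteq> X" "independent B" "X \<subseteq> span B" by (rule maximal_independent_subset)
  have BX: "B \<subseteq> span X" using B(1) span_superset[of X] by blast
  then have "finite B" using independent_card_le_dim(1)[OF G B(2)] by blast
  moreover have "span X \<subseteq> span B" using span_mono[OF B(3)] by (simp add: span_span)
  then have "card B = dim (span X)" by (rule basis_card_eq_dim[OF BX _ B(2)])
  ultimately show ?thesis using that B by blast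
qed

lemma indexed_basis_inside:
  assumes G: "finite G" "span X \<subseteq> span G"
  obtains x where "inj_on x {..<dim (span X)}" "x ` {..<dim (span X)} \<subseteq> X"
    "independent (x ` {..<dim (span X)})" "X \<subseteq> span (x ` {..<dim (span X)})"
proof -
  obtain B where B: "B \<subseteq> X" "independent B" "X \<subseteq> span B" "finite B" "card B = dim (span X)"
    using basis_inside[OF G] by blast
  obtain x where "inj_on x {..<card B}" "x ` {..<card B} = B"
    using enumeration_extend[OF B(4), of undefined 0] by auto
  then show ?thesis using that B by simp
qed

lemma scaled_family_independent:
  fixes y :: "nat \<Rightarrow> 'b"
  assumes d: "d \<noteq> 0" and y: "inj_on y {..<m}" "independent (y ` {..<m})"
  shows "inj_on (\<lambda>k. d *s y k) {..<m}" "independent ((\<lambda>k. d *s y k) ` {..<m})"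
proof -
  show "inj_on (\<lambda>k. d *s y k) {..<m}" using y(1) d by (auto simp: inj_on_def)
  let ?W = "span (y ` {..<m})"
  have endo: "is_endo scale ?W (\<lambda>v. d *s v)" unfolding is_endo_def
    by (auto simp: span_scale scale_right_distrib scale_left_commute)
  have "independent ((\<lambda>v. d *s v) ` y ` {..<m})"
    by (rule injective_endo_image_independent(1)[OF subspace_span endo _ span_superset _ y(2)]) (use d in auto)
  then show "independent ((\<lambda>k. d *s y k) ` {..<m})" by (simp add: image_image)
qed

text \<open>First case: if d_R > d_S, an injective endomorphism would map a basis of KR to an
  independent subset of KS, which is too large; so every admissible u has determinant 0.\<close>
lemma index_module_zero:
  assumes LR: "A_lattice A scale R" "R \<noteq> {0}" and LS: "A_lattice A scale S"
    and lt: "lat_dim scale S < lat_dim scale R"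
  shows "index_module scale R S = {0}"
proof -
  define W where "W = span (R \<union> S)"
  obtain G where fG: "finite G" and WG: "W \<subseteq> span G" using lattices_finite_span[OF LR(1) LS] W_def by blast
  have Ws: "subspace W" unfolding W_def by simp
  have RW: "R \<subseteq> W" "span R \<subseteq> W" and SG: "span S \<subseteq> span G"
    using WG unfolding W_def using span_mono[of R "R \<union> S"] span_mono[of S "R \<union> S"] span_superset[of "R \<union> S"]
    by auto
  have zero: "endo_det scale W u = 0" if u: "is_endo scale W u" "u ` R \<subseteq> S" for u
  proof (rule ccontr)
    assume nz: "endo_det scale W u \<noteq> 0"
    have inj: "x = 0" if "x \<in> W" "u x = 0" for x
      using endo_det_zero_if_kernel[OF fG WG Ws u(1) that(1) _ that(2)] nz by blast
    obtain B where B: "B \<subseteq> R" "independent B" "R \<subseteq> span B" "finite B" "card B = dim (span R)"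
      by (rule basis_inside[OF fG order_trans[OF RW(2) WG]])
    have BW: "B \<subseteq> W" using B(1) RW(1) by blast
    have "u ` B \<subseteq> span S" using endo_span_image[OF Ws u(1) RW(1) u(2)] B(1) span_superset[of R] by blast
    moreover have "independent (u ` B)" "card (u ` B) = card B"
      using injective_endo_image_independent[OF Ws u(1) inj BW B(4,2)] by auto
    ultimately have "card B \<le> dim (span S)" using independent_card_le_dim(2)[OF fG SG] by metis
    then show False using lt B(5) unfolding lat_dim_def by simp
  qed
  have "is_endo scale W (\<lambda>_. 0)" unfolding is_endo_def using subspace_0[OF Ws] by auto
  moreover have "(\<lambda>_. 0) ` R \<subseteq> S" using LS LR(2) unfolding A_lattice_def A_submodule_def by auto
  ultimately have "0 \<in> index_module scale R S" unfolding index_module_unfold W_def[symmetric] using zero by force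
  moreover have "index_module scale R S \<subseteq> {0}" unfolding index_module_unfold W_def[symmetric] using zero by blast
  ultimately show ?thesis by blast
qed

lemma dim_lt_if_spans_differ:
  assumes G: "finite G" "span (R \<union> S) \<subseteq> span G"
    and le: "dim (span R) \<le> dim (span S)" and ne: "span S \<noteq> span R"
  shows "dim (span R) < dim (span (R \<union> S))"
proof (rule ccontr)
  let ?W = "span (R \<union> S)"
  have RW: "span R \<subseteq> ?W" and SW: "span S \<subseteq> ?W" by (simp_all add: span_mono)
  obtain BR where BR: "BR \<subseteq> R" "independent BR" "R \<subseteq> span BR" "finite BR" "card BR = dim (span R)"
    by (rule basis_inside[OF G(1) order_trans[OF RW G(2)]])
  obtain BS where BS: "BS \<subseteq> S" "independent BS" "S \<subseteq> span BS" "finite BS" "card BS = dim (span S)"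
    by (rule basis_inside[OF G(1) order_trans[OF SW G(2)]])
  have BRW: "BR \<subseteq> ?W" using BR(1) span_superset[of "R \<union> S"] by auto
  assume "\<not> dim (span R) < dim ?W"
  moreover have "dim (span R) \<le> dim ?W" using independent_card_le_dim(2)[OF G BR(2) BRW] BR(5) by simp
  ultimately have "?W \<subseteq> span BR" using independent_dim_card_spans[OF G BR(2) BRW] BR(5) by simp
  then have SR: "span S \<subseteq> span R" using SW span_mono[of BR R] BR(1) by blast
  have GR: "span R \<subseteq> span G" using RW G(2) by blast
  have BSs: "BS \<subseteq> span R" using BS(1) span_superset[of S] SR by blast
  then have "card BS \<le> dim (span R)" using independent_card_le_dim(2)[OF G(1) GR BS(2)] by blast
  then have "span R \<subseteq> span BS"
    using independent_dim_card_spans[OF G(1) GR BS(2) BSs] BS(5) le by simp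
  then have "span R \<subseteq> span S" using span_mono[OF BS(1)] by (simp add: span_span)
  then show False using SR ne by blast
qed

lemma endo_maps_lattice:
  fixes x y :: "nat \<Rightarrow> 'b"
  assumes W: "subspace W" and u: "is_endo scale W u" and RW: "R \<subseteq> W"
    and Sm: "A_submodule A scale S" and d: "d \<noteq> 0"
    and dR: "\<forall>r\<in>R. d *s r \<in> A_span A scale (x ` {..<m})"
    and x: "inj_on x {..<m}" "x ` {..<m} \<subseteq> W"
    and ux: "\<And>k. k < m \<Longrightarrow> u (x k) = d *s y k" and yS: "\<And>k. k < m \<Longrightarrow> y k \<in> S"
  shows "u ` R \<subseteq> S"
proof
  fix q assume "q \<in> u ` R"
  then obtain r where r: "r \<in> R" "q = u r" by blast
  obtain a where a: "\<forall>b\<in>x ` {..<m}. a b \<in> A" "d *s r = (\<Sum>b\<in>x ` {..<m}. a b *s b)"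
    using dR r(1) unfolding A_span_mem by blast
  have "d *s r = (\<Sum>k<m. a (x k) *s x k)"
    unfolding a(2) using sum.reindex[OF x(1), of "\<lambda>b. a b *s b"] by simp
  moreover have "\<And>k. k \<in> {..<m} \<Longrightarrow> x k \<in> W" using x(2) by blast
  ultimately have "u (d *s r) = (\<Sum>k<m. a (x k) *s u (x k))"
    using endo_sum[OF u W _ finite_lessThan, where v=x and c="\<lambda>k. a (x k)"] by simp
  also have "\<dots> = d *s (\<Sum>k<m. a (x k) *s y k)"
    using ux by (simp add: scale_sum_right mult.commute)
  finally have "u r = (\<Sum>k<m. a (x k) *s y k)"
    using u r(1) RW d unfolding is_endo_def by auto
  also have "\<dots> \<in> S"
    using a(1) yS A_submodule_scale[OF Sm] by (intro A_submodule_sum[OF Sm]) auto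
  finally show "q \<in> S" using r(2) by simp
qed

text \<open>Extend a
  basis x of KR inside R to a basis e of W and d times a basis y of KS inside S (d a common
  denominator of R) to a basis f of W; since d_R < dim W, the map e \<mapsto> f with its last vector
  scaled by t maps R into S and has determinant t times a nonzero constant.\<close>
lemma index_module_UNIV:
  assumes sub: "is_subring A"
    and LR: "A_lattice A scale R" and LS: "A_lattice A scale S"
    and le: "lat_dim scale R \<le> lat_dim scale S" and ne: "span S \<noteq> span R"
  shows "index_module scale R S = UNIV"
proof -
  define W where "W = span (R \<union> S)"
  define N where "N = dim W"
  define dR where "dR = dim (span R)"
  obtain G where fG: "finite G" and WG: "W \<subseteq> span G" using lattices_finite_span[OF LR LS] W_def by blast
  have Ws: "subspace W" unfolding W_def by simp
  have RW: "R \<subseteq> W" "span R \<subseteq> W" and SW: "S \<subseteq> W" "span S \<subseteq> W"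
    unfolding W_def using span_mono[of R "R \<union> S"] span_mono[of S "R \<union> S"] span_superset[of "R \<union> S"] by auto
  obtain x where x: "inj_on x {..<dR}" "x ` {..<dR} \<subseteq> R" "independent (x ` {..<dR})" "R \<subseteq> span (x ` {..<dR})"
    by (rule indexed_basis_inside[OF fG order_trans[OF RW(2) WG], folded dR_def])
  obtain y where y: "inj_on y {..<dim (span S)}" "y ` {..<dim (span S)} \<subseteq> S" "independent (y ` {..<dim (span S)})"
    by (rule indexed_basis_inside[OF fG order_trans[OF SW(2) WG]])
  have dRS: "{..<dR} \<subseteq> {..<dim (span S)}" using le unfolding dR_def lat_dim_def by auto
  then have yS: "y k \<in> S" if "k < dR" for k using y(2) that by auto
  have y': "inj_on y {..<dR}" "independent (y ` {..<dR})"
    using inj_on_subset[OF y(1) dRS] independent_mono[OF y(3) image_mono[OF dRS]] by blast+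
  have dRN: "dR < N"
    unfolding dR_def N_def W_def using dim_lt_if_spans_differ[OF fG WG[unfolded W_def]] le ne
    unfolding lat_dim_def by blast
  obtain d where d: "d \<in> A" "d \<noteq> 0" "\<forall>r\<in>R. d *s r \<in> A_span A scale (x ` {..<dR})"
    using lattice_denominator[OF sub LR x(2,3,4)] by blast
  obtain e where e: "indexed_basis scale W N e" "\<forall>k<dR. e k = x k"
    using indexed_basis_extend[OF fG WG Ws x(1,3)] x(2) RW(1) unfolding N_def by auto
  have "(\<lambda>k. d *s y k) ` {..<dR} \<subseteq> W" using yS SW(1) Ws by (auto intro: subspace_scale)
  then obtain f where f: "indexed_basis scale W N f" "\<forall>k<dR. f k = d *s y k"
    using indexed_basis_extend[OF fG WG Ws scaled_family_independent[OF d(2) y']] unfolding N_def by blast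
  have det0: "lz_det N (coord_matrix scale N e f) \<noteq> 0"
    using lz_det_change_of_basis[OF e(1) f(1)] by auto
  have "c \<in> index_module scale R S" for c
  proof -
    define t where "t = c / lz_det N (coord_matrix scale N e f)"
    define u where "u = basis_map scale e N (\<lambda>k. if k = N - 1 then t *s f k else f k)"
    have "N - 1 < dim W" using dRN unfolding N_def by simp
    note scaled = endo_det_scaled_basis_map[OF e(1)[unfolded N_def] f(1)[unfolded N_def] this, of t]
    have u: "is_endo scale W u" "endo_det scale W u = t * lz_det N (coord_matrix scale N e f)"
      unfolding u_def using scaled by (simp_all add: N_def)
    have ux: "u (x k) = d *s y k" if k: "k < dR" for k
    proof -
      have kN: "k < N" "k \<noteq> N - 1" using k dRN by auto
      then have "u (e k) = f k" using basis_map_basis[OF e(1) kN(1)] unfolding u_def by simp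
      then show ?thesis using e(2) f(2) k by simp
    qed
    have "A_submodule A scale S" using LS unfolding A_lattice_def by blast
    then have "u ` R \<subseteq> S"
      using endo_maps_lattice[OF Ws u(1) RW(1) _ d(2,3) x(1) _ ux yS] x(2) RW(1) by blast
    moreover have "endo_det scale W u = c" using u(2) det0 unfolding t_def by simp
    ultimately show ?thesis unfolding index_module_unfold W_def[symmetric] using u(1) by blast
  qed
  then show ?thesis by blast
qed

end

section \<open>The index module when the spans coincide\<close>

context field_subring
begin

lemma sign_in_A: "of_int (sign p) \<in> A"
  by (cases rule: sign_cases[of p]) (simp_all add: Aneg)

text \<open>Each Leibniz term of it, multiplied by m, lies in mS: it contains exactly one entry of the
  first column and, unless that is the entry (0,0), one other entry of the first row.\<close>
lemma leibniz_term_in_colon: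
  fixes M :: "nat \<Rightarrow> nat \<Rightarrow> 'k" and p :: "nat \<Rightarrow> nat"
  assumes Sm: "Amod mS" and n: "0 < n"
    and h00: "m * M 0 0 \<in> mS" and hi0: "\<And>i. 0 < i \<Longrightarrow> i < n \<Longrightarrow> m * M i 0 \<in> A"
    and h0j: "\<And>j. 0 < j \<Longrightarrow> j < n \<Longrightarrow> M 0 j \<in> mS"
    and hij: "\<And>i j. 0 < i \<Longrightarrow> i < n \<Longrightarrow> 0 < j \<Longrightarrow> j < n \<Longrightarrow> M i j \<in> A"
    and p: "p permutes {..<n}"
  shows "m * (\<Prod>i<n. M i (p i)) \<in> mS"
proof -
  have pin: "p i < n" if "i < n" for i using permutes_in_image[OF p] that by simp
  have "0 \<in> p ` {..<n}" using permutes_image[OF p] n by simp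
  then obtain i0 where i0: "i0 < n" "p i0 = 0" by auto
  have pne: "p i \<noteq> 0" if "i \<noteq> i0" for i
  proof
    assume "p i = 0"
    then have "p i = p i0" using i0(2) by simp
    then show False using injD[OF permutes_inj[OF p]] that by blast
  qed
  have rest: "(\<Prod>i\<in>{..<n} - {i0} - {0}. M i (p i)) \<in> A"
    using hij pin pne by (intro Aprod) auto
  show ?thesis
  proof (cases "i0 = 0")
    case True
    have eq: "m * (\<Prod>i<n. M i (p i)) = (\<Prod>i\<in>{..<n} - {i0} - {0}. M i (p i)) * (m * M 0 0)"
      using n True i0(2) by (simp add: prod.remove)
    show ?thesis unfolding eq by (rule Amod_closed(3)[OF Sm rest h00])
  next
    case False
    have "(\<Prod>i<n. M i (p i)) = M i0 (p i0) * (\<Prod>i\<in>{..<n} - {i0}. M i (p i))"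
      using i0(1) by (simp add: prod.remove)
    also have "(\<Prod>i\<in>{..<n} - {i0}. M i (p i)) = M 0 (p 0) * (\<Prod>i\<in>{..<n} - {i0} - {0}. M i (p i))"
      using n False by (intro prod.remove) auto
    finally have "(\<Prod>i<n. M i (p i)) = M i0 (p i0) * (M 0 (p 0) * (\<Prod>i\<in>{..<n} - {i0} - {0}. M i (p i)))" .
    then have eq: "m * (\<Prod>i<n. M i (p i)) = ((m * M i0 0) * (\<Prod>i\<in>{..<n} - {i0} - {0}. M i (p i))) * M 0 (p 0)"
      using i0(2) by (simp add: algebra_simps)
    have "(m * M i0 0) * (\<Prod>i\<in>{..<n} - {i0} - {0}. M i (p i)) \<in> A"
      using hi0 False i0(1) rest by (simp add: Amult)
    moreover have "M 0 (p 0) \<in> mS" using h0j pin n pne False by simp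
    ultimately show ?thesis unfolding eq by (rule Amod_closed(3)[OF Sm])
  qed
qed

lemma lz_det_in_colon:
  assumes Sm: "Amod mS" and n: "0 < n"
    and h00: "m * M 0 0 \<in> mS" and hi0: "\<And>i. 0 < i \<Longrightarrow> i < n \<Longrightarrow> m * M i 0 \<in> A"
    and h0j: "\<And>j. 0 < j \<Longrightarrow> j < n \<Longrightarrow> M 0 j \<in> mS"
    and hij: "\<And>i j. 0 < i \<Longrightarrow> i < n \<Longrightarrow> 0 < j \<Longrightarrow> j < n \<Longrightarrow> M i j \<in> A"
  shows "m * lz_det n M \<in> mS"
proof -
  have "m * lz_det n M = (\<Sum>p | p permutes {..<n}. of_int (sign p) * (m * (\<Prod>i<n. M i (p i))))"
    unfolding lz_det_def by (simp add: sum_distrib_left algebra_simps)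
  also have "\<dots> \<in> mS"
    using Amod_closed(3)[OF Sm sign_in_A leibniz_term_in_colon[where M=M and m=m, OF assms]] by (intro A_submodule_sum[OF Sm]) simp
  finally show ?thesis .
qed

end

context vector_space
begin

lemma decomposition_mem:
  assumes b: "indexed_basis scale W n b" and n: "0 < n"
    and R: "R = {x *s b 0 + (\<Sum>i\<in>{1..<n}. a i *s b i) | x a. x \<in> m \<and> (\<forall>i\<in>{1..<n}. a i \<in> A)}"
  shows "v \<in> R \<longleftrightarrow> v \<in> W \<and> representation (b ` {..<n}) v (b 0) \<in> m
          \<and> (\<forall>i\<in>{1..<n}. representation (b ` {..<n}) v (b i) \<in> A)"
proof -
  have split: "(\<Sum>k<n. c k *s b k) = c 0 *s b 0 + (\<Sum>i\<in>{1..<n}. c i *s b i)" for c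
  proof -
    have "{..<n} = insert 0 {1..<n}" using n by (auto simp: not_less_eq_eq)
    then show ?thesis by simp
  qed
  note bp = indexed_basisD[OF b]
  show ?thesis
  proof
    assume "v \<in> R"
    then obtain x a where xa: "v = x *s b 0 + (\<Sum>i\<in>{1..<n}. a i *s b i)" "x \<in> m" "\<forall>i\<in>{1..<n}. a i \<in> A"
      unfolding R by blast
    define c where "c k = (if k = 0 then x else a k)" for k
    have "v = (\<Sum>k<n. c k *s b k)" unfolding xa(1) split c_def by simp
    moreover have "(\<Sum>k<n. c k *s b k) \<in> W" using bp(4,5) by (intro subspace_sum subspace_scale) auto
    ultimately show "v \<in> W \<and> representation (b ` {..<n}) v (b 0) \<in> m
          \<and> (\<forall>i\<in>{1..<n}. representation (b ` {..<n}) v (b i) \<in> A)"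
      using n xa(2,3) representation_combination[OF b] unfolding c_def by auto
  next
    assume h: "v \<in> W \<and> representation (b ` {..<n}) v (b 0) \<in> m
          \<and> (\<forall>i\<in>{1..<n}. representation (b ` {..<n}) v (b i) \<in> A)"
    let ?c = "\<lambda>k. representation (b ` {..<n}) v (b k)"
    have "v = (\<Sum>k<n. ?c k *s b k)" using basis_expansion[OF b] h by blast
    also have "\<dots> = ?c 0 *s b 0 + (\<Sum>i\<in>{1..<n}. ?c i *s b i)" by (rule split)
    finally have "v = ?c 0 *s b 0 + (\<Sum>i\<in>{1..<n}. ?c i *s b i)" .
    then show "v \<in> R" unfolding R using h by (intro CollectI exI[of _ "?c 0"] exI[of _ ?c]) blast
  qed
qed

context
  fixes A :: "'a set" and W :: "'b set" and n :: nat and R S :: "'b set"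
    and mR mS :: "'a set" and bR bS :: "nat \<Rightarrow> 'b"
  assumes subring: "is_subring A"
    and bR: "indexed_basis scale W n bR" and bS: "indexed_basis scale W n bS"
    and n0: "0 < n" and dimW: "dim W = n"
    and Rdec: "R = {x *s bR 0 + (\<Sum>i\<in>{1..<n}. a i *s bR i) | x a. x \<in> mR \<and> (\<forall>i\<in>{1..<n}. a i \<in> A)}"
    and Sdec: "S = {x *s bS 0 + (\<Sum>i\<in>{1..<n}. a i *s bS i) | x a. x \<in> mS \<and> (\<forall>i\<in>{1..<n}. a i \<in> A)}"
    and mR0: "0 \<in> mR" and mS: "A_submodule A (*) mS"
begin

interpretation field_subring A by unfold_locales (rule subring)

lemmas memR = decomposition_mem[OF bR n0 Rdec] and memS = decomposition_mem[OF bS n0 Sdec]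

text \<open>If u(R) \<subseteq> S, the matrix M of u from bR to bS has the shape of lz_det_in_colon (the
  columns are the bS-coordinates of u(bR_j), with bR_j \<in> R for j > 0 and m bR_0 \<in> R for
  m \<in> mR), so det M \<in> (mS : mR).\<close>
lemma lattice_endo_det_in_colon:
  assumes u: "is_endo scale W u" "u ` R \<subseteq> S"
  shows "\<forall>m\<in>mR. lz_det n (coord_matrix scale n bS (\<lambda>j. u (bR j))) * m \<in> mS"
proof
  fix m assume m: "m \<in> mR"
  define M where "M = coord_matrix scale n bS (\<lambda>j. u (bR j))"
  note bRp = indexed_basisD[OF bR] and bSp = indexed_basisD[OF bS]
  have uW: "u (bR j) \<in> span (bS ` {..<n})" if "j < n" for j
    using u(1) bRp(5)[OF that] bSp(3) unfolding is_endo_def by blast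
  have "M 0 j \<in> mS \<and> (\<forall>i\<in>{1..<n}. M i j \<in> A)" if j: "0 < j" "j < n" for j
  proof -
    have "bR j \<in> R"
      unfolding memR using bRp(5)[OF j(2)] representation_basis_vector[OF bR j(2)] j mR0 by auto
    then have "u (bR j) \<in> S" using u(2) by blast
    then show ?thesis unfolding memS M_def coord_matrix_def by blast
  qed
  moreover have "m * M 0 0 \<in> mS \<and> (\<forall>i\<in>{1..<n}. m * M i 0 \<in> A)"
  proof -
    have b0: "bR 0 \<in> span (bR ` {..<n})" using n0 by (intro span_base) auto
    have "representation (bR ` {..<n}) (m *s bR 0) (bR i) = m * (if i = 0 then 1 else 0)" if "i < n" for i
      using representation_scale[OF bRp(2) b0, of m] representation_basis_vector[OF bR n0 that] by simp
    then have "m *s bR 0 \<in> R"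
      unfolding memR using m n0 bRp(4,5) by (auto intro: subspace_scale)
    then have "u (m *s bR 0) \<in> S" using u(2) by blast
    moreover have "u (m *s bR 0) = m *s u (bR 0)" using u(1) bRp(5)[OF n0] unfolding is_endo_def by blast
    ultimately have "m *s u (bR 0) \<in> S" by simp
    moreover have "representation (bS ` {..<n}) (m *s u (bR 0)) (bS i) = m * M i 0" for i
      unfolding M_def coord_matrix_def using representation_scale[OF bSp(2) uW[OF n0], of m] by simp
    ultimately show ?thesis unfolding memS by auto
  qed
  ultimately have "m * lz_det n M \<in> mS" by (intro lz_det_in_colon[OF mS n0]) auto
  then show "lz_det n (coord_matrix scale n bS (\<lambda>j. u (bR j))) * m \<in> mS"
    unfolding M_def by (simp add: mult.commute)
qed

lemma colon_endo_maps_lattice: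
  assumes x: "\<forall>m\<in>mR. x * m \<in> mS"
  shows "basis_map scale bR n (\<lambda>k. if k = 0 then x *s bS k else bS k) ` R \<subseteq> S"
proof
  define u where "u = basis_map scale bR n (\<lambda>k. if k = 0 then x *s bS k else bS k)"
  fix y assume "y \<in> basis_map scale bR n (\<lambda>k. if k = 0 then x *s bS k else bS k) ` R"
  then obtain r where r: "r \<in> R" "y = u r" unfolding u_def by blast
  let ?c = "\<lambda>k. representation (bR ` {..<n}) r (bR k)"
  have rc: "r \<in> W" "?c 0 \<in> mR" "\<forall>i\<in>{1..<n}. ?c i \<in> A" using r(1) unfolding memR by auto
  have "u r = u (\<Sum>k<n. ?c k *s bR k)" by (rule arg_cong[OF basis_expansion[OF bR rc(1)]])
  also have "\<dots> = (\<Sum>k<n. ?c k *s (if k = 0 then x *s bS k else bS k))"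
    unfolding u_def by (rule basis_map_combination[OF bR])
  also have "\<dots> = (\<Sum>k<n. (if k = 0 then ?c 0 * x else ?c k) *s bS k)"
    by (intro sum.cong) auto
  finally have ur: "u r = (\<Sum>k<n. (if k = 0 then ?c 0 * x else ?c k) *s bS k)" .
  have "u r \<in> W" unfolding ur using indexed_basisD(4,5)[OF bS] by (intro subspace_sum subspace_scale) auto
  moreover have "representation (bS ` {..<n}) (u r) (bS i) = (if i = 0 then ?c 0 * x else ?c i)" if "i < n" for i
    unfolding ur by (rule representation_combination[OF bS that])
  moreover have "x * ?c 0 \<in> mS" using x rc(2) by blast
  then have "?c 0 * x \<in> mS" by (simp only: mult.commute)
  ultimately have "u r \<in> S" unfolding memS using rc n0 by auto
  then show "y \<in> S" using r(2) by simp
qed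

text \<open>The admissible determinants are D (mS : mR), with D the determinant of the base change:
  det u = D det M by endo_det_two_bases, and the two lemmas above.\<close>
lemma admissible_determinants:
  "{endo_det scale W u | u. is_endo scale W u \<and> u ` R \<subseteq> S}
     = (\<lambda>x. x * lz_det n (coord_matrix scale n bR bS)) ` {x. \<forall>m\<in>mR. x * m \<in> mS}"
  (is "?adm = (\<lambda>x. x * ?D) ` ?colon")
proof (intro equalityI subsetI)
  fix z assume "z \<in> ?adm"
  then obtain u where u: "z = endo_det scale W u" "is_endo scale W u" "u ` R \<subseteq> S" by blast
  have "endo_det scale W u = ?D * lz_det n (coord_matrix scale n bS (\<lambda>j. u (bR j)))"
    using endo_det_two_bases[OF bR[folded dimW] bS[folded dimW] u(2)] dimW by simp
  moreover have "lz_det n (coord_matrix scale n bS (\<lambda>j. u (bR j))) \<in> ?colon"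
    using lattice_endo_det_in_colon[OF u(2,3)] by blast
  ultimately show "z \<in> (\<lambda>x. x * ?D) ` ?colon" using u(1) by (simp add: rev_image_eqI mult.commute)
next
  fix z assume "z \<in> (\<lambda>x. x * ?D) ` ?colon"
  then obtain x where x: "\<forall>m\<in>mR. x * m \<in> mS" "z = x * ?D" by blast
  let ?u = "basis_map scale bR n (\<lambda>k. if k = 0 then x *s bS k else bS k)"
  note scaled = endo_det_scaled_basis_map[OF bR[folded dimW] bS[folded dimW] n0[folded dimW], of x, unfolded dimW]
  have "endo_det scale W ?u = z" using scaled(2) x(2) by simp
  moreover have "?u ` R \<subseteq> S" by (rule colon_endo_maps_lattice[OF x(1)])
  ultimately show "z \<in> ?adm" using scaled(1) by (intro CollectI exI[of _ ?u]) simp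
qed

end

lemma index_module_equal_spans:
  assumes ded: "dedekind_subring A"
    and LR: "A_lattice A scale R" "R \<noteq> {0}" and eqs: "span S = span R"
    and dR: "lattice_decomp A scale R mR bR" and dS: "lattice_decomp A scale S mS bS"
  shows "index_module scale R S =
     (\<lambda>x. x * lz_det (lat_dim scale R) (coord_matrix scale (lat_dim scale R) bR bS)) ` mod_mult A mS (frac_inv A mR)"
proof -
  have sub: "is_subring A" using ded unfolding dedekind_subring_def by blast
  interpret dedekind_ring A by unfold_locales (use sub ded in auto)
  define n where "n = lat_dim scale R"
  define W where "W = span R"
  have nW: "dim W = n" unfolding n_def W_def lat_dim_def by simp
  have RS: "span (R \<union> S) = W"
  proof
    show "span (R \<union> S) \<subseteq> W" unfolding W_def using eqs span_superset[of S] span_superset[of R]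
      by (intro span_minimal) auto
    show "W \<subseteq> span (R \<union> S)" unfolding W_def by (rule span_mono) blast
  qed
  have fR: "fractional_ideal A mR" and bR: "indexed_basis scale W n bR"
    and Rdec: "R = {x *s bR 0 + (\<Sum>i\<in>{1..<n}. a i *s bR i) | x a. x \<in> mR \<and> (\<forall>i\<in>{1..<n}. a i \<in> A)}"
    using dR unfolding lattice_decomp_def n_def W_def by auto
  have fS: "fractional_ideal A mS" and bS: "indexed_basis scale W n bS"
    and Sdec: "S = {x *s bS 0 + (\<Sum>i\<in>{1..<n}. a i *s bS i) | x a. x \<in> mS \<and> (\<forall>i\<in>{1..<n}. a i \<in> A)}"
    using dS unfolding lattice_decomp_def W_def eqs lat_dim_def n_def by auto
  have n0: "0 < n"
  proof (rule ccontr)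
    assume "\<not> 0 < n"
    then have "R \<subseteq> {0}" using indexed_basisD(3)[OF bR] span_superset[of R] unfolding W_def by auto
    moreover have "0 \<in> R" using LR(1) unfolding A_lattice_def A_submodule_def by blast
    ultimately show False using LR(2) by blast
  qed
  have mR0: "0 \<in> mR" and mS: "A_submodule A (*) mS"
    using fR fS unfolding fractional_ideal_def A_submodule_def by auto
  have "index_module scale R S = {endo_det scale W u | u. is_endo scale W u \<and> u ` R \<subseteq> S}"
    unfolding index_module_unfold RS ..
  also have "\<dots> = (\<lambda>x. x * lz_det n (coord_matrix scale n bR bS)) ` {x. \<forall>m\<in>mR. x * m \<in> mS}"
    by (rule admissible_determinants[OF sub bR bS n0 nW Rdec Sdec mR0 mS])
  also have "{x. \<forall>m\<in>mR. x * m \<in> mS} = mod_mult A mS (frac_inv A mR)"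
    by (rule colon_eq_mul_inverse[OF fR fS])
  finally show ?thesis unfolding n_def .
qed

end

theorem mainTheorem1:
  fixes A :: "'k::field set" and scale :: "'k \<Rightarrow> 'v::ab_group_add \<Rightarrow> 'v"
    and R S :: "'v set"
  assumes "dedekind_subring A"
    and "vector_space scale"
    and "A_lattice A scale R" and "R \<noteq> {0}"
    and "A_lattice A scale S"
  shows "(lat_dim scale R > lat_dim scale S \<longrightarrow> index_module scale R S = {0})
       \<and> (lat_dim scale R \<le> lat_dim scale S \<and> module.span scale S \<noteq> module.span scale R
           \<longrightarrow> index_module scale R S = UNIV)
       \<and> (\<forall>mR bR mS bS. module.span scale S = module.span scale R
           \<and> lattice_decomp A scale R mR bR \<and> lattice_decomp A scale S mS bS
           \<longrightarrow> index_module scale R S =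
                 (\<lambda>x. x * lz_det (lat_dim scale R) (coord_matrix scale (lat_dim scale R) bR bS))
                   ` mod_mult A mS (frac_inv A mR))"
proof -
  interpret V: vector_space scale by (rule assms(2))
  have sub: "is_subring A" using assms(1) unfolding dedekind_subring_def by blast
  show ?thesis
  proof (intro conjI impI allI)
    show "lat_dim scale S < lat_dim scale R \<Longrightarrow> index_module scale R S = {0}"
      by (rule V.index_module_zero[OF assms(3,4,5)])
    show "lat_dim scale R \<le> lat_dim scale S \<and> V.span S \<noteq> V.span R \<Longrightarrow> index_module scale R S = UNIV"
      using V.index_module_UNIV[OF sub assms(3,5)] by blast
    show "V.span S = V.span R \<and> lattice_decomp A scale R mR bR \<and> lattice_decomp A scale S mS bS
        \<Longrightarrow> index_module scale R S = (\<lambda>x. x * lz_det (lat_dim scale R)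
              (coord_matrix scale (lat_dim scale R) bR bS)) ` mod_mult A mS (frac_inv A mR)" for mR bR mS bS
      using V.index_module_equal_spans[OF assms(1,3,4)] by blast
  qed
qed

end
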